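(* Let $R$ be a commutative ring, $S\subseteq R$ a subset, and $\eta:R\to S^{(-1)}R$ the canonical map. Then: (i) $\eta$ is an epimorphism in the category of commutative rings; (ii) the induced map $\eta^*:\mathrm{Spec}(S^{(-1)}R)\to\mathrm{Spec}(R)$, $\mathfrak q\mapsto\eta^{-1}(\mathfrak q)$, is bijective; (iii) for each $s\in S$, the set $(\eta^* )^{-1}(V(s))$ is both open and closed in $\mathrm{Spec}(S^{(-1)}R)$ with respect to the Zariski topology, and also with respect to the flat topology; (iv) $S^{(-1)}R$ is a nonzero ring if and only if $R$ is; (v) $\ker(\eta)$ is contained in the nilradical of $R$.
   Context: For $a,b$ in a commutative ring, $b$ is a pointwise inverse of $a$ if $a=a^2b$ and $b=b^2a$. For a subset $S\subseteq R$, $S^{(-1)}R=R[x_s:s\in S]/I$ where $I$ is generated by $sx_s^2-x_s$ and $s^2x_s-s$ ($s\in S$), and $\eta:R\to S^{(-1)}R$ is the canonical map. For a ring $A$ and $f\in A$, $V(f)=\{\mathfrak p\in\mathrm{Spec}(A): f\in\mathfrak p\}$, and for an ideal $I$, $V(I)=\{\mathfrak p: I\subseteq \mathfrak p\}$. The flat topology on $\mathrm{Spec}(A)$ is the topology having as a basis of open sets the sets $V(I)$ with $I$ ranging over finitely generated ideals of $A$ (this is Hochster's inverse topology). *)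

theory Defs
  imports "HOL-Analysis.Abstract_Topology" "HOL-Algebra.QuotRing" "HOL-Library.Poly_Mapping"
begin

definition tc_ring :: "'a::comm_ring_1 ring" where
  "tc_ring = \<lparr>carrier = UNIV, mult = (*), one = 1, zero = 0, add = (+)\<rparr>"

text \<open>The polynomial ring R[x_s : s in S]: polynomials over R (monomials are finitely
  supported exponent maps 'a =>0 nat) all of whose variables lie in S.\<close>
definition poly_ring_on :: "'a::comm_ring_1 set \<Rightarrow> (('a \<Rightarrow>\<^sub>0 nat) \<Rightarrow>\<^sub>0 'a) ring" where
  "poly_ring_on S = \<lparr>carrier = {p :: (('a \<Rightarrow>\<^sub>0 nat) \<Rightarrow>\<^sub>0 'a). \<forall>m\<in>Poly_Mapping.keys p. Poly_Mapping.keys m \<subseteq> S},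
                      mult = (*), one = 1, zero = 0, add = (+)\<rparr>"

definition pvar :: "'a \<Rightarrow> ('a \<Rightarrow>\<^sub>0 nat) \<Rightarrow>\<^sub>0 'a::comm_ring_1" where
  "pvar s = Poly_Mapping.single (Poly_Mapping.single s 1) 1"

definition pconst :: "'a::comm_ring_1 \<Rightarrow> ('a \<Rightarrow>\<^sub>0 nat) \<Rightarrow>\<^sub>0 'a" where
  "pconst r = Poly_Mapping.single 0 r"

definition pinv_ideal :: "'a::comm_ring_1 set \<Rightarrow> (('a \<Rightarrow>\<^sub>0 nat) \<Rightarrow>\<^sub>0 'a) set" where
  "pinv_ideal S = genideal (poly_ring_on S)
     ({pconst s * pvar s ^ 2 - pvar s | s. s \<in> S} \<union> {pconst (s ^ 2) * pvar s - pconst s | s. s \<in> S})"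

definition pinv_loc :: "'a::comm_ring_1 set \<Rightarrow> (('a \<Rightarrow>\<^sub>0 nat) \<Rightarrow>\<^sub>0 'a) set ring" where
  "pinv_loc S = poly_ring_on S Quot pinv_ideal S"

definition eta :: "'a::comm_ring_1 set \<Rightarrow> 'a \<Rightarrow> (('a \<Rightarrow>\<^sub>0 nat) \<Rightarrow>\<^sub>0 'a) set" where
  "eta S r = pinv_ideal S +>\<^bsub>poly_ring_on S\<^esub> pconst r"

definition Spec :: "('a, 'b) ring_scheme \<Rightarrow> 'a set set" where
  "Spec A = {p. primeideal p A}"

definition Vset :: "('a, 'b) ring_scheme \<Rightarrow> 'a set \<Rightarrow> 'a set set" where
  "Vset A J = {p \<in> Spec A. J \<subseteq> p}"

definition fg_ideal :: "('a, 'b) ring_scheme \<Rightarrow> 'a set \<Rightarrow> bool" where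
  "fg_ideal A J \<longleftrightarrow> ideal J A \<and> (\<exists>F. finite F \<and> F \<subseteq> carrier A \<and> J = genideal A F)"

definition zariski :: "('a, 'b) ring_scheme \<Rightarrow> 'a set topology" where
  "zariski A = topology_generated_by {Spec A - Vset A J | J. ideal J A}"

definition flat_top :: "('a, 'b) ring_scheme \<Rightarrow> 'a set topology" where
  "flat_top A = topology_generated_by {Vset A J | J. fg_ideal A J}"

end

theory Submission
  imports Defs
begin

text \<open>
  For a prime \<open>p\<close> of \<open>R\<close>, every \<open>s \<in> S\<close> has a pointwise inverse in the fraction field of
  \<open>R/p\<close>: \<open>1/s\<close> if \<open>s \<notin> p\<close> and \<open>0\<close> if \<open>s \<in> p\<close>. Evaluating each \<open>x\<^sub>s\<close> there kills \<open>I\<close>, so its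
  kernel is a prime of \<open>S\<^sup>(\<^sup>-\<^sup>1\<^sup>)R\<close> lying over \<open>p\<close>. Conversely, modulo a prime \<open>Q\<close> of
  \<open>R[x\<^sub>s]\<close> containing \<open>I\<close>, the element \<open>s x\<^sub>s\<close> is idempotent, and it is \<open>0\<close> or \<open>1\<close> according as
  \<open>s \<in> Q\<close> or not; hence \<open>Q\<close> is the kernel of the evaluation at \<open>p = Q \<inter> R\<close>. This gives the
  bijection of spectra, shows that \<open>\<eta>(s) \<in> Q\<close> iff \<open>s x\<^sub>s - 1 \<notin> Q\<close> (so \<open>V(s)\<close> is clopen in both
  topologies), and, since \<open>I\<close> lies in the kernel over every prime, that \<open>1 \<notin> I\<close> for \<open>R \<noteq> 0\<close> and
  that \<open>ker \<eta>\<close> consists of nilpotents. Pointwise inverses are unique, so a homomorphism out of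
  \<open>S\<^sup>(\<^sup>-\<^sup>1\<^sup>)R\<close> is determined by its values on \<open>R\<close>: \<open>\<eta>\<close> is an epimorphism.

  The fraction field is avoided by clearing denominators: \<open>f\<close> vanishes at the point above iff
  \<open>\<Prod>s\<^sup>N \<cdot> f(point) \<in> p\<close>, a polynomial expression in \<open>R\<close>.
\<close>

definition set_ring :: "'b::comm_ring_1 set \<Rightarrow> 'b ring" where
  "set_ring C = \<lparr>carrier = C, mult = (*), one = 1, zero = 0, add = (+)\<rparr>"

definition subring_set :: "'b::comm_ring_1 set \<Rightarrow> bool" where
  "subring_set C \<longleftrightarrow> 0 \<in> C \<and> 1 \<in> C \<and> (\<forall>x\<in>C. \<forall>y\<in>C. x + y \<in> C \<and> x * y \<in> C) \<and> (\<forall>x\<in>C. - x \<in> C)"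

definition ideal_on :: "'b::comm_ring_1 set \<Rightarrow> 'b set \<Rightarrow> bool" where
  "ideal_on C J \<longleftrightarrow> J \<subseteq> C \<and> 0 \<in> J \<and> (\<forall>x\<in>J. \<forall>y\<in>J. x + y \<in> J) \<and> (\<forall>c\<in>C. \<forall>x\<in>J. c * x \<in> J)"

definition prime_on :: "'b::comm_ring_1 set \<Rightarrow> 'b set \<Rightarrow> bool" where
  "prime_on C J \<longleftrightarrow> ideal_on C J \<and> 1 \<notin> J \<and> (\<forall>x\<in>C. \<forall>y\<in>C. x * y \<in> J \<longrightarrow> x \<in> J \<or> y \<in> J)"

lemma set_ring_simps [simp]:
  "carrier (set_ring C) = C" "mult (set_ring C) = (*)" "one (set_ring C) = 1"
  "zero (set_ring C) = 0" "add (set_ring C) = (+)"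
  by (simp_all add: set_ring_def)

lemma tc_ring_eq_set_ring: "tc_ring = set_ring UNIV"
  by (simp add: tc_ring_def set_ring_def)

lemma subring_set_UNIV: "subring_set UNIV"
  by (simp add: subring_set_def)

lemma subring_set_zero: "subring_set C \<Longrightarrow> 0 \<in> C"
  and subring_set_one: "subring_set C \<Longrightarrow> 1 \<in> C"
  and subring_set_add: "subring_set C \<Longrightarrow> x \<in> C \<Longrightarrow> y \<in> C \<Longrightarrow> x + y \<in> C"
  and subring_set_mult: "subring_set C \<Longrightarrow> x \<in> C \<Longrightarrow> y \<in> C \<Longrightarrow> x * y \<in> C"
  and subring_set_uminus: "subring_set C \<Longrightarrow> x \<in> C \<Longrightarrow> - x \<in> C"
  by (simp_all add: subring_set_def)

lemma subring_set_diff: "subring_set C \<Longrightarrow> x \<in> C \<Longrightarrow> y \<in> C \<Longrightarrow> x - y \<in> C"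
  using subring_set_add[of C x "- y"] subring_set_uminus[of C y] by simp

lemma subring_set_power: "subring_set C \<Longrightarrow> x \<in> C \<Longrightarrow> x ^ n \<in> C"
  by (induction n) (simp_all add: subring_set_one subring_set_mult)

lemma subring_set_prod: "subring_set C \<Longrightarrow> (\<And>x. x \<in> A \<Longrightarrow> g x \<in> C) \<Longrightarrow> prod g A \<in> C"
  by (induction A rule: infinite_finite_induct) (simp_all add: subring_set_one subring_set_mult)

lemma cring_set_ring: assumes "subring_set C" shows "cring (set_ring C)"
proof (rule cringI)
  show "abelian_group (set_ring C)"
  proof (rule abelian_groupI)
    fix x assume "x \<in> carrier (set_ring C)"
    then show "\<exists>y\<in>carrier (set_ring C). y \<oplus>\<^bsub>set_ring C\<^esub> x = \<zero>\<^bsub>set_ring C\<^esub>"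
      using assms unfolding subring_set_def by (auto intro!: bexI[of _ "-x"])
  qed (use assms in \<open>auto simp: subring_set_def algebra_simps\<close>)
  show "comm_monoid (set_ring C)"
    by (rule comm_monoidI) (use assms in \<open>auto simp: subring_set_def algebra_simps\<close>)
qed (auto simp: algebra_simps)

lemma a_inv_set_ring:
  assumes "subring_set C" "x \<in> C" shows "a_inv (set_ring C) x = - x"
proof -
  interpret cring "set_ring C" by (rule cring_set_ring) fact
  show ?thesis using assms by (intro minus_equality) (auto simp: subring_set_def)
qed

lemma a_minus_set_ring:
  "subring_set C \<Longrightarrow> x \<in> C \<Longrightarrow> y \<in> C \<Longrightarrow> a_minus (set_ring C) x y = x - y"
  by (simp add: a_minus_def a_inv_set_ring)

lemma ideal_on_zero: "ideal_on C J \<Longrightarrow> 0 \<in> J"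
  and ideal_on_add: "ideal_on C J \<Longrightarrow> x \<in> J \<Longrightarrow> y \<in> J \<Longrightarrow> x + y \<in> J"
  and ideal_on_lmult: "ideal_on C J \<Longrightarrow> c \<in> C \<Longrightarrow> x \<in> J \<Longrightarrow> c * x \<in> J"
  and ideal_on_subset: "ideal_on C J \<Longrightarrow> x \<in> J \<Longrightarrow> x \<in> C"
  by (auto simp: ideal_on_def)

lemma ideal_on_rmult: "ideal_on C J \<Longrightarrow> x \<in> J \<Longrightarrow> c \<in> C \<Longrightarrow> x * c \<in> J"
  unfolding ideal_on_def by (metis mult.commute)

lemma ideal_on_uminus: "subring_set C \<Longrightarrow> ideal_on C J \<Longrightarrow> x \<in> J \<Longrightarrow> - x \<in> J"
  unfolding ideal_on_def subring_set_def by (metis mult_minus1)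

lemma ideal_on_diff: "subring_set C \<Longrightarrow> ideal_on C J \<Longrightarrow> x \<in> J \<Longrightarrow> y \<in> J \<Longrightarrow> x - y \<in> J"
  using ideal_on_uminus[of C J y] ideal_on_add[of C J x "- y"] by simp

lemma ideal_on_diff_iff:
  assumes "subring_set C" "ideal_on C J" "x - y \<in> J" shows "x \<in> J \<longleftrightarrow> y \<in> J"
proof
  assume "x \<in> J"
  then have "x - (x - y) \<in> J" using ideal_on_diff[OF assms(1,2) _ assms(3)] by blast
  then show "y \<in> J" by simp
next
  assume "y \<in> J"
  then have "(x - y) + y \<in> J" using ideal_on_add[OF assms(2,3)] by blast
  then show "x \<in> J" by simp
qed

lemma ideal_on_sum: "ideal_on C J \<Longrightarrow> (\<And>x. x \<in> A \<Longrightarrow> g x \<in> J) \<Longrightarrow> sum g A \<in> J"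
  by (induction A rule: infinite_finite_induct) (simp_all add: ideal_on_zero ideal_on_add)

lemma ideal_on_prod:
  assumes "subring_set C" "ideal_on C J" "finite A" "\<And>x. x \<in> A \<Longrightarrow> g x \<in> C" "a \<in> A" "g a \<in> J"
  shows "prod g A \<in> J"
proof -
  have "prod g A = g a * prod g (A - {a})" using assms(3,5) by (simp add: prod.remove)
  moreover have "prod g (A - {a}) \<in> C" using assms by (intro subring_set_prod) auto
  ultimately show ?thesis using ideal_on_rmult[OF assms(2,6)] by simp
qed

lemma ideal_on_power:
  assumes "subring_set C" "ideal_on C J" "x \<in> J" "k > 0" shows "x ^ k \<in> J"
proof -
  have "x * x ^ (k - 1) \<in> J"
    using assms ideal_on_subset[OF assms(2,3)] by (simp add: ideal_on_rmult subring_set_power)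
  moreover have "x ^ k = x * x ^ (k - 1)" using \<open>k > 0\<close> by (simp add: power_eq_if)
  ultimately show ?thesis by simp
qed

lemma ideal_on_mult_diff:
  assumes "subring_set C" "ideal_on C J" "a \<in> C" "b' \<in> C" "a - b \<in> J" "a' - b' \<in> J"
  shows "a * a' - b * b' \<in> J"
proof -
  have "a * a' - b * b' = a * (a' - b') + b' * (a - b)" by (simp add: algebra_simps)
  moreover have "a * (a' - b') \<in> J" "b' * (a - b) \<in> J"
    using assms by (simp_all add: ideal_on_lmult)
  ultimately show ?thesis using ideal_on_add[OF assms(2)] by simp
qed

lemma ideal_on_prod_diff:
  assumes "subring_set C" "ideal_on C J"
    "\<And>s. s \<in> K \<Longrightarrow> u s \<in> C" "\<And>s. s \<in> K \<Longrightarrow> v s \<in> C" "\<And>s. s \<in> K \<Longrightarrow> u s - v s \<in> J"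
  shows "prod u K - prod v K \<in> J"
  using assms(3-5)
proof (induction K rule: infinite_finite_induct)
  case (insert x F)
  have "u x * prod u F - v x * prod v F \<in> J"
    using insert by (intro ideal_on_mult_diff[OF assms(1,2)]) (auto intro: subring_set_prod[OF assms(1)])
  then show ?case using insert by simp
qed (use assms ideal_on_zero in simp_all)

lemma ideal_on_power_diff_one:
  assumes "subring_set C" "ideal_on C J" "e \<in> C" "e - 1 \<in> J"
  shows "e ^ k - 1 \<in> J"
  using ideal_on_prod_diff[OF assms(1,2), of "{..<k}" "\<lambda>_. e" "\<lambda>_. 1"] assms
  by (simp add: subring_set_one)

lemma ideal_set_ring_iff:
  assumes "subring_set C" shows "ideal J (set_ring C) \<longleftrightarrow> ideal_on C J"
proof
  assume "ideal J (set_ring C)"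
  then interpret ideal J "set_ring C" .
  have A: "additive_subgroup J (set_ring C)" by (rule is_additive_subgroup)
  show "ideal_on C J" unfolding ideal_on_def
    using additive_subgroup.a_subset[OF A] additive_subgroup.zero_closed[OF A]
      additive_subgroup.a_closed[OF A] I_l_closed by simp
next
  assume J: "ideal_on C J"
  interpret R: cring "set_ring C" by (rule cring_set_ring) fact
  show "ideal J (set_ring C)"
  proof (rule idealI)
    show "ring (set_ring C)" by (rule R.ring_axioms)
    show "subgroup J (add_monoid (set_ring C))"
    proof (rule subgroup.intro)
      fix x assume "x \<in> J"
      moreover have "inv\<^bsub>add_monoid (set_ring C)\<^esub> x = a_inv (set_ring C) x"
        by (simp add: a_inv_def)
      ultimately show "inv\<^bsub>add_monoid (set_ring C)\<^esub> x \<in> J"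
        using J assms a_inv_set_ring[OF assms] ideal_on_uminus[OF assms J] ideal_on_subset[OF J]
        by auto
    qed (use J in \<open>auto simp: ideal_on_def\<close>)
  qed (use J in \<open>auto simp: ideal_on_def intro: ideal_on_rmult\<close>)
qed

lemma primeideal_set_ring_iff:
  assumes "subring_set C" shows "primeideal J (set_ring C) \<longleftrightarrow> prime_on C J"
proof
  assume "primeideal J (set_ring C)"
  then interpret primeideal J "set_ring C" .
  have "1 \<notin> J"
    using I_notcarr a_subset I_l_closed[of 1] by auto
  then show "prime_on C J"
    unfolding prime_on_def using ideal_set_ring_iff[OF assms] is_ideal I_prime by auto
next
  assume P: "prime_on C J"
  show "primeideal J (set_ring C)"
  proof (rule primeidealI)
    show "ideal J (set_ring C)" using P ideal_set_ring_iff[OF assms] by (simp add: prime_on_def)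
    show "cring (set_ring C)" by (rule cring_set_ring) fact
    show "carrier (set_ring C) \<noteq> J" using P assms by (auto simp: prime_on_def subring_set_def)
  qed (use P in \<open>auto simp: prime_on_def\<close>)
qed

lemma prime_on_mult_iff:
  assumes "prime_on C J" "x \<in> C" "y \<in> C" shows "x * y \<in> J \<longleftrightarrow> x \<in> J \<or> y \<in> J"
proof -
  have "ideal_on C J" using assms(1) by (simp add: prime_on_def)
  then show ?thesis
    using assms ideal_on_rmult[of C J x y] ideal_on_lmult[of C J x y] unfolding prime_on_def by blast
qed

lemma prime_on_prod_notin:
  assumes "prime_on UNIV p" "\<And>x. x \<in> A \<Longrightarrow> g x \<notin> p" shows "prod g A \<notin> p"
  using assms(2)
  by (induction A rule: infinite_finite_induct)
     (use assms(1) in \<open>simp_all add: prime_on_def prime_on_mult_iff[OF assms(1)]\<close>)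

lemma prime_on_power_notin: "prime_on UNIV p \<Longrightarrow> s \<notin> p \<Longrightarrow> s ^ n \<notin> p"
  using prime_on_prod_notin[of p "{..<n}" "\<lambda>_. s"] by simp

section \<open>A prime ideal avoiding the powers of a non-nilpotent element\<close>

lemma ideal_on_Union_chain:
  assumes "C \<in> chains {J. ideal_on UNIV J}" "C \<noteq> {}"
  shows "ideal_on UNIV (\<Union>C)"
proof -
  have CI: "\<And>J. J \<in> C \<Longrightarrow> ideal_on UNIV J" and ch: "\<forall>A\<in>C. \<forall>B\<in>C. A \<subseteq> B \<or> B \<subseteq> A"
    using assms(1) by (auto simp: chains_def chain_subset_def)
  show ?thesis unfolding ideal_on_def
  proof (intro conjI ballI)
    show "0 \<in> \<Union>C" using assms(2) CI ideal_on_zero by blast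
  next
    fix x y assume "x \<in> \<Union>C" "y \<in> \<Union>C"
    then obtain A B where AB: "A \<in> C" "B \<in> C" "x \<in> A" "y \<in> B" by blast
    have "A \<subseteq> B \<or> B \<subseteq> A" using ch AB by blast
    then show "x + y \<in> \<Union>C"
      by (elim disjE) (use AB CI[of A] CI[of B] ideal_on_add in blast)+
  next
    fix c x assume "x \<in> \<Union>C"
    then show "c * x \<in> \<Union>C" using CI ideal_on_lmult by blast
  qed simp
qed

lemma ideal_on_extend:
  assumes "ideal_on UNIV M"
  shows "ideal_on UNIV {m + c * x | m c. m \<in> M}"
  unfolding ideal_on_def
proof (intro conjI ballI)
  show "0 \<in> {m + c * x | m c. m \<in> M}"
    using assms ideal_on_zero by (metis (mono_tags, lifting) add_0 mem_Collect_eq mult_zero_left)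
next
  fix a b assume "a \<in> {m + c * x | m c. m \<in> M}" "b \<in> {m + c * x | m c. m \<in> M}"
  then obtain m1 c1 m2 c2 where "a = m1 + c1 * x" "b = m2 + c2 * x" "m1 \<in> M" "m2 \<in> M" by blast
  then show "a + b \<in> {m + c * x | m c. m \<in> M}"
    using ideal_on_add[OF assms, of m1 m2]
    by (intro CollectI exI[of _ "m1 + m2"] exI[of _ "c1 + c2"]) (simp add: algebra_simps)
next
  fix c a assume "a \<in> {m + c * x | m c. m \<in> M}"
  then obtain m1 c1 where "a = m1 + c1 * x" "m1 \<in> M" by blast
  then show "c * a \<in> {m + c * x | m c. m \<in> M}"
    using ideal_on_lmult[OF assms, of c m1]
    by (intro CollectI exI[of _ "c * m1"] exI[of _ "c * c1"]) (simp add: algebra_simps)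
qed simp

lemma prime_on_if_maximal_avoiding_powers:
  fixes r :: "'a::comm_ring_1"
  assumes M: "ideal_on UNIV M" and avoids: "\<And>n. r ^ n \<notin> M"
    and maximal: "\<And>J. ideal_on UNIV J \<Longrightarrow> \<forall>n. r ^ n \<notin> J \<Longrightarrow> M \<subseteq> J \<Longrightarrow> J = M"
  shows "prime_on UNIV M"
proof -
  have power_mem: "\<exists>n c. r ^ n - c * x \<in> M" if "x \<notin> M" for x
  proof (rule ccontr)
    let ?M' = "{m + c * x | m c. m \<in> M}"
    assume none: "\<nexists>n c. r ^ n - c * x \<in> M"
    have "\<forall>n. r ^ n \<notin> ?M'"
    proof (intro allI notI)
      fix n assume "r ^ n \<in> ?M'"
      then obtain m c where "m \<in> M" "r ^ n = m + c * x" by blast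
      then have "r ^ n - c * x \<in> M" by simp
      then show False using none by blast
    qed
    moreover have "M \<subseteq> ?M'" by (force intro: exI[of _ 0])
    ultimately have "?M' = M" by (rule maximal[OF ideal_on_extend[OF M]])
    moreover have "x \<in> ?M'" using ideal_on_zero[OF M] by (force intro: exI[of _ 1])
    ultimately show False using that by simp
  qed
  show ?thesis unfolding prime_on_def
  proof (intro conjI ballI impI M)
    show "1 \<notin> M" using avoids[of 0] by simp
  next
    fix x y assume xy: "x * y \<in> M"
    show "x \<in> M \<or> y \<in> M"
    proof (rule ccontr)
      assume "\<not> (x \<in> M \<or> y \<in> M)"
      then obtain n k c1 c2 where n: "r ^ n - c1 * x \<in> M" and k: "r ^ k - c2 * y \<in> M"
        using power_mem by blast
      have "r ^ (n + k) = (r ^ n - c1 * x) * r ^ k + (c1 * x) * (r ^ k - c2 * y)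
          + (c1 * c2) * (x * y)"
        by (simp add: power_add algebra_simps)
      also have "\<dots> \<in> M"
        using ideal_on_rmult[OF M n] ideal_on_lmult[OF M _ k] ideal_on_lmult[OF M _ xy]
        by (intro ideal_on_add[OF M]) simp_all
      finally show False using avoids by blast
    qed
  qed
qed

lemma exists_prime_on_avoiding_powers:
  fixes r :: "'a::comm_ring_1"
  assumes not_nilpotent: "\<And>n. r ^ n \<noteq> 0"
  obtains p where "prime_on UNIV p" "r \<notin> p"
proof -
  define F where "F = {J :: 'a set. ideal_on UNIV J \<and> (\<forall>n. r ^ n \<notin> J)}"
  have "\<exists>M\<in>F. \<forall>X\<in>F. M \<subseteq> X \<longrightarrow> X = M"
  proof (rule Zorn_Lemma2, intro ballI)
    fix C assume C: "C \<in> chains F"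
    show "\<exists>U\<in>F. \<forall>X\<in>C. X \<subseteq> U"
    proof (cases "C = {}")
      case True
      have "{0} \<in> F" using not_nilpotent by (auto simp: F_def ideal_on_def)
      then show ?thesis using True by blast
    next
      case False
      have "C \<in> chains {J. ideal_on UNIV J}"
        using C by (auto simp: F_def chains_def)
      then have "ideal_on UNIV (\<Union>C)" using False by (rule ideal_on_Union_chain)
      moreover have "\<forall>n. r ^ n \<notin> \<Union>C" using C by (auto simp: F_def chains_def)
      ultimately have "\<Union>C \<in> F" by (simp add: F_def)
      then show ?thesis by blast
    qed
  qed
  then obtain M where "M \<in> F" and M_max: "\<And>X. X \<in> F \<Longrightarrow> M \<subseteq> X \<Longrightarrow> X = M" by blast
  then have M: "ideal_on UNIV M" "\<And>n. r ^ n \<notin> M" by (auto simp: F_def)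
  have "prime_on UNIV M"
    using M M_max by (intro prime_on_if_maximal_avoiding_powers[of M r]) (auto simp: F_def)
  moreover have "r \<notin> M" using M(2)[of 1] by simp
  ultimately show ?thesis by (rule that)
qed

definition poly_carrier :: "'a::comm_ring_1 set \<Rightarrow> (('a \<Rightarrow>\<^sub>0 nat) \<Rightarrow>\<^sub>0 'a) set" where
  "poly_carrier S = {p. \<forall>m\<in>Poly_Mapping.keys p. Poly_Mapping.keys m \<subseteq> S}"

lemma poly_ring_on_eq: "poly_ring_on S = set_ring (poly_carrier S)"
  by (simp add: poly_ring_on_def set_ring_def poly_carrier_def)

lemma keys_add_nat:
  "Poly_Mapping.keys (a + b :: 'x \<Rightarrow>\<^sub>0 nat) = Poly_Mapping.keys a \<union> Poly_Mapping.keys b"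
  by (auto simp: in_keys_iff lookup_add)

lemma subring_set_poly_carrier: "subring_set (poly_carrier S)"
proof -
  have "x + y \<in> poly_carrier S" if "x \<in> poly_carrier S" "y \<in> poly_carrier S" for x y
    using that keys_add[of x y] unfolding poly_carrier_def by blast
  moreover have "x * y \<in> poly_carrier S" if "x \<in> poly_carrier S" "y \<in> poly_carrier S" for x y
    using that keys_mult[of x y] unfolding poly_carrier_def by (force simp: keys_add_nat)
  moreover have "0 \<in> poly_carrier S" "1 \<in> poly_carrier S" by (auto simp: poly_carrier_def)
  moreover have "- x \<in> poly_carrier S" if "x \<in> poly_carrier S" for x
    using that by (simp add: poly_carrier_def)
  ultimately show ?thesis unfolding subring_set_def by blast
qed

lemma cring_poly_ring_on: "cring (poly_ring_on S)"
  unfolding poly_ring_on_eq by (rule cring_set_ring[OF subring_set_poly_carrier])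

lemma poly_mapping_sum_singles:
  "(f :: 'x \<Rightarrow>\<^sub>0 'b::comm_monoid_add) =
     (\<Sum>m\<in>Poly_Mapping.keys f. Poly_Mapping.single m (Poly_Mapping.lookup f m))"
proof (rule poly_mapping_eqI)
  fix k
  show "Poly_Mapping.lookup f k =
      Poly_Mapping.lookup (\<Sum>m\<in>Poly_Mapping.keys f. Poly_Mapping.single m (Poly_Mapping.lookup f m)) k"
  proof (cases "k \<in> Poly_Mapping.keys f")
    case False
    then have "(\<Sum>m\<in>Poly_Mapping.keys f.
        Poly_Mapping.lookup (Poly_Mapping.single m (Poly_Mapping.lookup f m)) k) = 0"
      by (intro sum.neutral) (auto simp: lookup_single when_def)
    then show ?thesis using False by (simp add: lookup_sum not_in_keys_iff_lookup_eq_zero)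
  qed (simp add: lookup_sum lookup_single when_def)
qed

lemma pconst_mult: "pconst (a * b) = pconst a * pconst b"
  by (simp add: pconst_def mult_single)

lemma pconst_add: "pconst (a + b) = pconst a + pconst b"
  by (simp add: pconst_def single_add)

lemma pconst_0 [simp]: "pconst 0 = 0" and pconst_1 [simp]: "pconst 1 = 1"
  by (simp_all add: pconst_def)

lemma pconst_power: "pconst (a ^ n) = pconst a ^ n"
  by (induction n) (simp_all add: pconst_mult)

lemma pconst_prod: "pconst (prod g A) = (\<Prod>x\<in>A. pconst (g x))"
  by (induction A rule: infinite_finite_induct) (simp_all add: pconst_mult)

lemma pconst_sum: "pconst (sum g A) = (\<Sum>x\<in>A. pconst (g x))"
  by (induction A rule: infinite_finite_induct) (simp_all add: pconst_add)

lemma pconst_mult_single: "pconst c * Poly_Mapping.single m d = Poly_Mapping.single m (c * d)"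
  by (simp add: pconst_def mult_single)

lemma pvar_power: "pvar s ^ k = Poly_Mapping.single (Poly_Mapping.single s k) 1"
  by (induction k) (simp_all add: pvar_def mult_single single_add[symmetric])

lemma pconst_poly_carrier [simp]: "pconst c \<in> poly_carrier S"
  by (simp add: poly_carrier_def pconst_def)

lemma pvar_poly_carrier: "s \<in> S \<Longrightarrow> pvar s \<in> poly_carrier S"
  by (simp add: poly_carrier_def pvar_def)

lemma single_eq_pconst_mult_pvars:
  "Poly_Mapping.single m c = pconst c * (\<Prod>s\<in>Poly_Mapping.keys m. pvar s ^ Poly_Mapping.lookup m s)"
proof -
  have "(\<Prod>s\<in>K. Poly_Mapping.single (g s :: 'x \<Rightarrow>\<^sub>0 nat) (1::'b::comm_ring_1))
      = Poly_Mapping.single (\<Sum>s\<in>K. g s) 1" for K g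
    by (induction K rule: infinite_finite_induct) (simp_all add: mult_single)
  then have "(\<Prod>s\<in>Poly_Mapping.keys m. pvar s ^ Poly_Mapping.lookup m s)
      = Poly_Mapping.single (\<Sum>s\<in>Poly_Mapping.keys m. Poly_Mapping.single s (Poly_Mapping.lookup m s)) 1"
    by (simp add: pvar_power)
  also have "(\<Sum>s\<in>Poly_Mapping.keys m. Poly_Mapping.single s (Poly_Mapping.lookup m s)) = m"
    by (rule poly_mapping_sum_singles[symmetric])
  finally show ?thesis by (simp add: pconst_mult_single)
qed

lemma poly_carrier_induct [consumes 1, case_names pconst pvar add mult]:
  assumes f: "f \<in> poly_carrier S"
    and pconst: "\<And>c. P (pconst c)" and pvar: "\<And>s. s \<in> S \<Longrightarrow> P (pvar s)"
    and add: "\<And>x y. P x \<Longrightarrow> P y \<Longrightarrow> P (x + y)"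
    and mult: "\<And>x y. P x \<Longrightarrow> P y \<Longrightarrow> P (x * y)"
  shows "P f"
proof -
  have prod: "P (prod g K)" if "\<And>k. k \<in> K \<Longrightarrow> P (g k)" for g and K :: "'x set"
    using that by (induction K rule: infinite_finite_induct) (use pconst[of 1] mult in simp_all)
  have sum: "P (sum g K)" if "\<And>k. k \<in> K \<Longrightarrow> P (g k)" for g and K :: "'y set"
    using that by (induction K rule: infinite_finite_induct) (use pconst[of 0] add in simp_all)
  have power: "P (x ^ n)" if "P x" for x n
    using prod[of "{..<n}" "\<lambda>_. x"] that by simp
  have "P (Poly_Mapping.single m (Poly_Mapping.lookup f m))" if m: "m \<in> Poly_Mapping.keys f" for m
  proof -
    have "Poly_Mapping.keys m \<subseteq> S" using f m by (auto simp: poly_carrier_def)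
    then have "P (\<Prod>s\<in>Poly_Mapping.keys m. pvar s ^ Poly_Mapping.lookup m s)"
      by (intro prod power pvar) auto
    then show ?thesis unfolding single_eq_pconst_mult_pvars[of m] by (rule mult[OF pconst])
  qed
  then have "P (\<Sum>m\<in>Poly_Mapping.keys f. Poly_Mapping.single m (Poly_Mapping.lookup f m))"
    by (rule sum)
  then show ?thesis by (subst poly_mapping_sum_singles)
qed

definition pinv_generators :: "'a::comm_ring_1 set \<Rightarrow> (('a \<Rightarrow>\<^sub>0 nat) \<Rightarrow>\<^sub>0 'a) set" where
  "pinv_generators S =
     {pconst s * pvar s ^ 2 - pvar s | s. s \<in> S} \<union> {pconst (s ^ 2) * pvar s - pconst s | s. s \<in> S}"

lemma pinv_ideal_eq_genideal: "pinv_ideal S = genideal (poly_ring_on S) (pinv_generators S)"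
  by (simp add: pinv_ideal_def pinv_generators_def)

lemma pinv_generators_subset: "pinv_generators S \<subseteq> poly_carrier S"
  unfolding pinv_generators_def using subring_set_poly_carrier[of S] pvar_poly_carrier[of _ S]
  by (auto intro!: subring_set_diff subring_set_mult subring_set_power)

lemma ideal_pinv_ideal: "ideal (pinv_ideal S) (poly_ring_on S)"
  unfolding pinv_ideal_eq_genideal using pinv_generators_subset
  by (intro ring.genideal_ideal cring.axioms(1) cring_poly_ring_on) (simp add: poly_ring_on_eq)

lemma pinv_ideal_subset_poly_carrier: "pinv_ideal S \<subseteq> poly_carrier S"
  using additive_subgroup.a_subset[OF ideal.axioms(1)[OF ideal_pinv_ideal]] by (simp add: poly_ring_on_eq)

lemma zero_mem_pinv_ideal: "0 \<in> pinv_ideal S"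
  using additive_subgroup.zero_closed[OF ideal.axioms(1)[OF ideal_pinv_ideal]] by (simp add: poly_ring_on_eq)

lemma pinv_ideal_minimal:
  assumes "ideal J (poly_ring_on S)" "pinv_generators S \<subseteq> J"
  shows "pinv_ideal S \<subseteq> J"
  unfolding pinv_ideal_eq_genideal
  by (rule ring.genideal_minimal[OF cring.axioms(1)[OF cring_poly_ring_on] assms])

lemma pinv_generators_mem:
  assumes "s \<in> S"
  shows "pconst s * pvar s ^ 2 - pvar s \<in> pinv_ideal S"
    and "pconst (s ^ 2) * pvar s - pconst s \<in> pinv_ideal S"
proof -
  have "pinv_generators S \<subseteq> pinv_ideal S"
    unfolding pinv_ideal_eq_genideal using pinv_generators_subset
    by (intro ring.genideal_self cring.axioms(1) cring_poly_ring_on) (simp add: poly_ring_on_eq)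
  then show "pconst s * pvar s ^ 2 - pvar s \<in> pinv_ideal S"
    and "pconst (s ^ 2) * pvar s - pconst s \<in> pinv_ideal S"
    using assms by (auto simp: pinv_generators_def)
qed

section \<open>Evaluation at the pointwise inverses, with cleared denominators\<close>

definition poly_vars :: "(('a \<Rightarrow>\<^sub>0 nat) \<Rightarrow>\<^sub>0 'b::zero) \<Rightarrow> 'a set" where
  "poly_vars f = (\<Union>m\<in>Poly_Mapping.keys f. Poly_Mapping.keys m)"

definition exponent_sum :: "(('a \<Rightarrow>\<^sub>0 nat) \<Rightarrow>\<^sub>0 'b::zero) \<Rightarrow> nat" where
  "exponent_sum f = (\<Sum>m\<in>Poly_Mapping.keys f. \<Sum>s\<in>Poly_Mapping.keys m. Poly_Mapping.lookup m s)"

definition exponents_le :: "'a set \<Rightarrow> nat \<Rightarrow> (('a \<Rightarrow>\<^sub>0 nat) \<Rightarrow>\<^sub>0 'b::zero) \<Rightarrow> bool" where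
  "exponents_le V N f \<longleftrightarrow> (\<forall>m\<in>Poly_Mapping.keys f. \<forall>s\<in>V. Poly_Mapping.lookup m s \<le> N)"

text \<open>
  \<open>cleared_eval V N f\<close> is \<open>(\<Prod>s\<in>V. s\<^sup>N) \<cdot> f(\<xi>)\<close>, where \<open>\<xi>\<^sub>s = 1/s\<close> for \<open>s \<in> V\<close> and \<open>\<xi>\<^sub>s = 0\<close>
  otherwise; it lies in \<open>R\<close> as long as \<open>f\<close> has exponents at most \<open>N\<close> in the variables of \<open>V\<close>.
\<close>

definition cleared_monomial :: "'a::comm_ring_1 set \<Rightarrow> nat \<Rightarrow> ('a \<Rightarrow>\<^sub>0 nat) \<Rightarrow> 'a" where
  "cleared_monomial V N m =
     (if Poly_Mapping.keys m \<subseteq> V then \<Prod>s\<in>V. s ^ (N - Poly_Mapping.lookup m s) else 0)"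

definition cleared_eval :: "'a::comm_ring_1 set \<Rightarrow> nat \<Rightarrow> (('a \<Rightarrow>\<^sub>0 nat) \<Rightarrow>\<^sub>0 'a) \<Rightarrow> 'a" where
  "cleared_eval V N f = (\<Sum>m\<in>Poly_Mapping.keys f. Poly_Mapping.lookup f m * cleared_monomial V N m)"

text \<open>
  For admissible \<open>(V, N)\<close>, \<open>\<xi>\<close> is the pointwise inverse of the variables modulo \<open>p\<close>, and whether
  \<open>cleared_eval V N f \<in> p\<close> does not depend on the choice (\<open>vanishes_at_iff\<close>).
\<close>

definition admissible :: "'a set \<Rightarrow> 'a set \<Rightarrow> nat \<Rightarrow> (('a \<Rightarrow>\<^sub>0 nat) \<Rightarrow>\<^sub>0 'b::zero) \<Rightarrow> bool" where
  "admissible p V N f \<longleftrightarrow> finite V \<and> V \<inter> p = {} \<and> poly_vars f - p \<subseteq> V \<and> exponents_le V N f"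

definition vanishes_at :: "'a::comm_ring_1 set \<Rightarrow> (('a \<Rightarrow>\<^sub>0 nat) \<Rightarrow>\<^sub>0 'a) \<Rightarrow> bool" where
  "vanishes_at p f \<longleftrightarrow> cleared_eval (poly_vars f - p) (exponent_sum f) f \<in> p"

definition vanishing_ideal :: "'a::comm_ring_1 set \<Rightarrow> 'a set \<Rightarrow> (('a \<Rightarrow>\<^sub>0 nat) \<Rightarrow>\<^sub>0 'a) set" where
  "vanishing_ideal S p = {f \<in> poly_carrier S. vanishes_at p f}"

lemma finite_poly_vars [simp]: "finite (poly_vars f)"
  by (simp add: poly_vars_def)

lemma poly_vars_add: "poly_vars (f + g) \<subseteq> poly_vars f \<union> poly_vars g"
  using keys_add[of f g] by (auto simp: poly_vars_def)

lemma poly_vars_mult: "poly_vars (f * g) \<subseteq> poly_vars f \<union> poly_vars g"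
  using keys_mult[of f g] by (fastforce simp: poly_vars_def keys_add_nat)

lemma poly_vars_poly_carrier: "f \<in> poly_carrier S \<Longrightarrow> poly_vars f \<subseteq> S"
  by (auto simp: poly_carrier_def poly_vars_def)

lemma lookup_le_exponent_sum:
  assumes "m \<in> Poly_Mapping.keys f" shows "Poly_Mapping.lookup m s \<le> exponent_sum f"
proof (cases "s \<in> Poly_Mapping.keys m")
  case True
  have "Poly_Mapping.lookup m s \<le> (\<Sum>s\<in>Poly_Mapping.keys m. Poly_Mapping.lookup m s)"
    using True by (intro member_le_sum) auto
  also have "\<dots> \<le> exponent_sum f" unfolding exponent_sum_def
    using assms by (intro member_le_sum[where f = "\<lambda>m. \<Sum>s\<in>Poly_Mapping.keys m. Poly_Mapping.lookup m s"]) auto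
  finally show ?thesis .
qed (simp add: not_in_keys_iff_lookup_eq_zero)

lemma exponents_le_exponent_sum: "exponent_sum f \<le> N \<Longrightarrow> exponents_le V N f"
  unfolding exponents_le_def using lookup_le_exponent_sum[of _ f] le_trans by blast

lemma exponents_le_add: "exponents_le V N f \<Longrightarrow> exponents_le V N g \<Longrightarrow> exponents_le V N (f + g)"
  unfolding exponents_le_def using keys_add[of f g] by blast

lemma exponents_le_mult:
  assumes "exponents_le V N f" "exponents_le V N g" shows "exponents_le V (2 * N) (f * g)"
  unfolding exponents_le_def
proof (intro ballI)
  fix m s assume "m \<in> Poly_Mapping.keys (f * g)" "s \<in> V"
  then obtain a b where ab: "m = a + b" "a \<in> Poly_Mapping.keys f" "b \<in> Poly_Mapping.keys g"
    using keys_mult[of f g] by blast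
  have "Poly_Mapping.lookup a s \<le> N" "Poly_Mapping.lookup b s \<le> N"
    using assms ab \<open>s \<in> V\<close> by (auto simp: exponents_le_def)
  then show "Poly_Mapping.lookup m s \<le> 2 * N" using ab by (simp add: lookup_add)
qed

lemma cleared_eval_superset:
  assumes "finite K" "Poly_Mapping.keys f \<subseteq> K"
  shows "cleared_eval V N f = (\<Sum>m\<in>K. Poly_Mapping.lookup f m * cleared_monomial V N m)"
  unfolding cleared_eval_def using assms
  by (intro sum.mono_neutral_left) (auto simp: not_in_keys_iff_lookup_eq_zero)

lemma cleared_eval_add: "cleared_eval V N (f + g) = cleared_eval V N f + cleared_eval V N g"
proof -
  let ?K = "Poly_Mapping.keys f \<union> Poly_Mapping.keys g"
  have "cleared_eval V N (f + g) = (\<Sum>m\<in>?K. Poly_Mapping.lookup (f + g) m * cleared_monomial V N m)"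
    using keys_add[of f g] by (intro cleared_eval_superset) auto
  also have "\<dots> = (\<Sum>m\<in>?K. Poly_Mapping.lookup f m * cleared_monomial V N m)
      + (\<Sum>m\<in>?K. Poly_Mapping.lookup g m * cleared_monomial V N m)"
    by (simp add: lookup_add distrib_right sum.distrib)
  also have "\<dots> = cleared_eval V N f + cleared_eval V N g"
    by (subst (1 2) cleared_eval_superset[of ?K]) auto
  finally show ?thesis .
qed

lemma cleared_eval_zero [simp]: "cleared_eval V N 0 = 0"
  by (simp add: cleared_eval_def)

lemma cleared_eval_diff: "cleared_eval V N (f - g) = cleared_eval V N f - cleared_eval V N g"
  using cleared_eval_add[of V N f "- g"] by (simp add: cleared_eval_def sum_negf)

lemma cleared_eval_sum: "cleared_eval V N (sum F X) = (\<Sum>x\<in>X. cleared_eval V N (F x))"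
  by (induction X rule: infinite_finite_induct) (simp_all add: cleared_eval_add)

lemma cleared_eval_single:
  "cleared_eval V N (Poly_Mapping.single m c) = c * cleared_monomial V N m"
  by (subst cleared_eval_superset[of "{m}"]) auto

lemma cleared_monomial_add:
  assumes "\<forall>s\<in>V. Poly_Mapping.lookup a s \<le> N" "\<forall>s\<in>V. Poly_Mapping.lookup b s \<le> N"
  shows "cleared_monomial V (2 * N) (a + b) = cleared_monomial V N a * cleared_monomial V N b"
proof (cases "Poly_Mapping.keys a \<subseteq> V \<and> Poly_Mapping.keys b \<subseteq> V")
  case True
  have "s ^ (2 * N - Poly_Mapping.lookup (a + b) s)
      = s ^ (N - Poly_Mapping.lookup a s) * s ^ (N - Poly_Mapping.lookup b s)" if "s \<in> V" for s
  proof -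
    have "2 * N - Poly_Mapping.lookup (a + b) s
        = (N - Poly_Mapping.lookup a s) + (N - Poly_Mapping.lookup b s)"
      using assms that by (simp add: lookup_add)
    then show ?thesis by (simp add: power_add)
  qed
  then show ?thesis using True
    by (simp add: cleared_monomial_def keys_add_nat prod.distrib[symmetric] cong: prod.cong)
qed (auto simp: cleared_monomial_def keys_add_nat)

lemma cleared_eval_mult:
  assumes "exponents_le V N f" "exponents_le V N g"
  shows "cleared_eval V (2 * N) (f * g) = cleared_eval V N f * cleared_eval V N g"
proof -
  have "f * g = (\<Sum>a\<in>Poly_Mapping.keys f. \<Sum>b\<in>Poly_Mapping.keys g.
      Poly_Mapping.single (a + b) (Poly_Mapping.lookup f a * Poly_Mapping.lookup g b))"
    by (subst (1 2) poly_mapping_sum_singles) (simp add: sum_product mult_single)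
  then have "cleared_eval V (2 * N) (f * g) = (\<Sum>a\<in>Poly_Mapping.keys f. \<Sum>b\<in>Poly_Mapping.keys g.
      (Poly_Mapping.lookup f a * Poly_Mapping.lookup g b) * cleared_monomial V (2 * N) (a + b))"
    by (simp add: cleared_eval_sum cleared_eval_single)
  also have "\<dots> = (\<Sum>a\<in>Poly_Mapping.keys f. \<Sum>b\<in>Poly_Mapping.keys g.
      (Poly_Mapping.lookup f a * cleared_monomial V N a) * (Poly_Mapping.lookup g b * cleared_monomial V N b))"
  proof (intro sum.cong refl)
    fix a b assume "a \<in> Poly_Mapping.keys f" "b \<in> Poly_Mapping.keys g"
    then show "Poly_Mapping.lookup f a * Poly_Mapping.lookup g b * cleared_monomial V (2 * N) (a + b)
        = Poly_Mapping.lookup f a * cleared_monomial V N a * (Poly_Mapping.lookup g b * cleared_monomial V N b)"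
      using assms cleared_monomial_add[of V a N b] by (simp add: exponents_le_def mult_ac)
  qed
  also have "\<dots> = cleared_eval V N f * cleared_eval V N g"
    by (simp add: cleared_eval_def sum_product)
  finally show ?thesis .
qed

lemma cleared_eval_enlarge:
  assumes "finite V'" "V \<subseteq> V'" "N \<le> N'" "V' \<inter> p = {}" "poly_vars f - p \<subseteq> V" "exponents_le V N f"
  shows "cleared_eval V' N' f
    = cleared_eval V N f * ((\<Prod>s\<in>V. s ^ (N' - N)) * (\<Prod>s\<in>V' - V. s ^ N'))"
proof -
  have "cleared_monomial V' N' m
      = cleared_monomial V N m * ((\<Prod>s\<in>V. s ^ (N' - N)) * (\<Prod>s\<in>V' - V. s ^ N'))"
    if m: "m \<in> Poly_Mapping.keys f" for m
  proof (cases "Poly_Mapping.keys m \<subseteq> V")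
    case True
    let ?k = "Poly_Mapping.lookup m"
    have "(\<Prod>s\<in>V'. s ^ (N' - ?k s)) = (\<Prod>s\<in>V' - V. s ^ (N' - ?k s)) * (\<Prod>s\<in>V. s ^ (N' - ?k s))"
      using prod.subset_diff[OF assms(2,1)] by simp
    also have "(\<Prod>s\<in>V' - V. s ^ (N' - ?k s)) = (\<Prod>s\<in>V' - V. s ^ N')"
    proof (rule prod.cong[OF refl])
      fix s assume "s \<in> V' - V"
      then have "?k s = 0" using True by (metis DiffD2 in_keys_iff subsetD)
      then show "s ^ (N' - ?k s) = s ^ N'" by simp
    qed
    also have "(\<Prod>s\<in>V. s ^ (N' - ?k s)) = (\<Prod>s\<in>V. s ^ (N - ?k s) * s ^ (N' - N))"
    proof (rule prod.cong[OF refl])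
      fix s assume "s \<in> V"
      then have "N' - ?k s = (N - ?k s) + (N' - N)"
        using assms(3,6) m by (auto simp: exponents_le_def)
      then show "s ^ (N' - ?k s) = s ^ (N - ?k s) * s ^ (N' - N)" by (simp add: power_add)
    qed
    finally show ?thesis
      using True assms(2) by (simp add: cleared_monomial_def prod.distrib mult_ac)
  next
    case False
    then obtain s where "s \<in> Poly_Mapping.keys m" "s \<notin> V" by blast
    moreover have "s \<notin> V'" using calculation m assms(4,5) by (auto simp: poly_vars_def)
    ultimately show ?thesis using False by (auto simp: cleared_monomial_def)
  qed
  then show ?thesis unfolding cleared_eval_def sum_distrib_right
    by (intro sum.cong refl) (simp add: mult.assoc)
qed

lemma vanishes_at_iff:
  assumes p: "prime_on UNIV p" and adm: "admissible p V N f"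
  shows "vanishes_at p f \<longleftrightarrow> cleared_eval V N f \<in> p"
proof -
  let ?V0 = "poly_vars f - p" and ?N0 = "exponent_sum f" and ?M = "max N (exponent_sum f)"
  have V: "finite V" "V \<inter> p = {}" "?V0 \<subseteq> V" "exponents_le V N f"
    using adm by (auto simp: admissible_def)
  have unit: "(\<Prod>s\<in>A. s ^ k) \<notin> p" if "A \<subseteq> V" for A k
    using V that by (intro prime_on_prod_notin[OF p] prime_on_power_notin[OF p]) auto
  have "cleared_eval V ?M f = cleared_eval V N f * ((\<Prod>s\<in>V. s ^ (?M - N)) * (\<Prod>s\<in>V - V. s ^ ?M))"
    using V by (intro cleared_eval_enlarge) auto
  then have "cleared_eval V ?M f \<in> p \<longleftrightarrow> cleared_eval V N f \<in> p"
    using unit[of V] prime_on_mult_iff[OF p] by simp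
  moreover have "cleared_eval V ?M f
      = cleared_eval ?V0 ?N0 f * ((\<Prod>s\<in>?V0. s ^ (?M - ?N0)) * (\<Prod>s\<in>V - ?V0. s ^ ?M))"
    using V by (intro cleared_eval_enlarge) (auto simp: exponents_le_exponent_sum)
  then have "cleared_eval V ?M f \<in> p \<longleftrightarrow> cleared_eval ?V0 ?N0 f \<in> p"
    using unit[of ?V0] unit[of "V - ?V0"] V(3) prime_on_mult_iff[OF p] by simp
  ultimately show ?thesis unfolding vanishes_at_def by simp
qed

lemma admissible_common:
  "admissible p (poly_vars f \<union> poly_vars g - p) (exponent_sum f + exponent_sum g) f"
  "admissible p (poly_vars f \<union> poly_vars g - p) (exponent_sum f + exponent_sum g) g"
  unfolding admissible_def by (auto intro: exponents_le_exponent_sum)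

lemma vanishes_at_mult_iff:
  assumes p: "prime_on UNIV p"
  shows "vanishes_at p (f * g) \<longleftrightarrow> vanishes_at p f \<or> vanishes_at p g"
proof -
  let ?V = "poly_vars f \<union> poly_vars g - p" and ?N = "exponent_sum f + exponent_sum g"
  note adm = admissible_common[of p f g]
  have "admissible p ?V (2 * ?N) (f * g)"
    using adm poly_vars_mult[of f g] unfolding admissible_def by (blast intro: exponents_le_mult)
  then have "vanishes_at p (f * g) \<longleftrightarrow> cleared_eval ?V (2 * ?N) (f * g) \<in> p"
    by (rule vanishes_at_iff[OF p])
  also have "\<dots> \<longleftrightarrow> cleared_eval ?V ?N f * cleared_eval ?V ?N g \<in> p"
    by (subst cleared_eval_mult) (use adm in \<open>auto simp: admissible_def\<close>)
  finally show ?thesis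
    using prime_on_mult_iff[OF p] vanishes_at_iff[OF p adm(1)] vanishes_at_iff[OF p adm(2)] by simp
qed

lemma vanishes_at_add:
  assumes p: "prime_on UNIV p" and "vanishes_at p f" "vanishes_at p g"
  shows "vanishes_at p (f + g)"
proof -
  let ?V = "poly_vars f \<union> poly_vars g - p" and ?N = "exponent_sum f + exponent_sum g"
  note adm = admissible_common[of p f g]
  have "admissible p ?V ?N (f + g)"
    using adm poly_vars_add[of f g] unfolding admissible_def by (blast intro: exponents_le_add)
  moreover have "cleared_eval ?V ?N f \<in> p" "cleared_eval ?V ?N g \<in> p"
    using assms(2,3) vanishes_at_iff[OF p adm(1)] vanishes_at_iff[OF p adm(2)] by simp_all
  moreover have "ideal_on UNIV p" using p by (simp add: prime_on_def)
  ultimately show ?thesis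
    using vanishes_at_iff[OF p] ideal_on_add by (simp add: cleared_eval_add)
qed

lemma vanishes_at_pconst:
  assumes p: "prime_on UNIV p" shows "vanishes_at p (pconst c) \<longleftrightarrow> c \<in> p"
proof -
  have "admissible p {} 0 (pconst c)"
    by (auto simp: admissible_def exponents_le_def pconst_def poly_vars_def)
  moreover have "cleared_eval {} 0 (pconst c) = c"
    unfolding pconst_def cleared_eval_single by (simp add: cleared_monomial_def)
  ultimately show ?thesis using vanishes_at_iff[OF p] by simp
qed

lemma admissible_binomial:
  fixes s :: "'a::comm_ring_1"
  assumes "i \<le> N" "j \<le> N"
  shows "admissible p ({s} - p) N
    (Poly_Mapping.single (Poly_Mapping.single s i) a - Poly_Mapping.single (Poly_Mapping.single s j) b)"
    (is "admissible p _ N ?f")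
proof -
  have keys: "Poly_Mapping.keys ?f \<subseteq> {Poly_Mapping.single s i, Poly_Mapping.single s j}"
    using keys_diff[of "Poly_Mapping.single (Poly_Mapping.single s i) a"
        "Poly_Mapping.single (Poly_Mapping.single s j) b"] by (auto split: if_splits)
  then have "poly_vars ?f \<subseteq> {s}" by (auto simp: poly_vars_def split: if_splits)
  moreover have "exponents_le ({s} - p) N ?f"
    using keys assms by (auto simp: exponents_le_def lookup_single when_def)
  ultimately show ?thesis by (auto simp: admissible_def)
qed

lemma vanishes_at_pinv_generators:
  assumes p: "prime_on UNIV p"
  shows "vanishes_at p (pconst s * pvar s ^ 2 - pvar s)"
    and "vanishes_at p (pconst (s ^ 2) * pvar s - pconst s)"
proof -
  let ?x = "\<lambda>k. Poly_Mapping.single s k :: 'a \<Rightarrow>\<^sub>0 nat"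
  have ideal: "ideal_on UNIV p" using p by (simp add: prime_on_def)
  have V: "{s} - p = (if s \<in> p then {} else {s})" by auto
  have "pconst s * pvar s ^ 2 - pvar s = Poly_Mapping.single (?x 2) s - Poly_Mapping.single (?x 1) 1"
    unfolding pvar_power pconst_mult_single by (simp add: pvar_def)
  moreover have "cleared_eval ({s} - p) 2 (Poly_Mapping.single (?x 2) s - Poly_Mapping.single (?x 1) 1) \<in> p"
    using ideal_on_zero[OF ideal]
    by (cases "s \<in> p") (simp_all add: V cleared_eval_diff cleared_eval_single cleared_monomial_def)
  ultimately show "vanishes_at p (pconst s * pvar s ^ 2 - pvar s)"
    using vanishes_at_iff[OF p admissible_binomial[where N = 2]] by simp
  have "pconst (s ^ 2) * pvar s - pconst s = Poly_Mapping.single (?x 1) (s ^ 2) - Poly_Mapping.single (?x 0) s"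
    unfolding pvar_def pconst_mult_single by (simp add: pconst_def)
  moreover have "cleared_eval ({s} - p) 2 (Poly_Mapping.single (?x 1) (s ^ 2) - Poly_Mapping.single (?x 0) s) \<in> p"
    using ideal_on_zero[OF ideal] ideal_on_uminus[OF subring_set_UNIV ideal]
    by (cases "s \<in> p") (simp_all add: V cleared_eval_diff cleared_eval_single cleared_monomial_def
        power2_eq_square mult_ac)
  ultimately show "vanishes_at p (pconst (s ^ 2) * pvar s - pconst s)"
    using vanishes_at_iff[OF p admissible_binomial[where N = 2 and i = 1 and j = 0, simplified]]
    by simp
qed

lemma prime_on_vanishing_ideal:
  assumes p: "prime_on UNIV p" shows "prime_on (poly_carrier S) (vanishing_ideal S p)"
proof -
  note C = subring_set_poly_carrier[of S]
  have "ideal_on UNIV p" using p by (simp add: prime_on_def)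
  then have zero: "vanishes_at p 0"
    using vanishes_at_pconst[OF p, of 0] ideal_on_zero by simp
  have one: "\<not> vanishes_at p 1"
    using vanishes_at_pconst[OF p, of 1] p by (simp add: prime_on_def)
  have "ideal_on (poly_carrier S) (vanishing_ideal S p)"
    unfolding ideal_on_def vanishing_ideal_def
  proof (intro conjI ballI)
    show "0 \<in> {f \<in> poly_carrier S. vanishes_at p f}"
      using zero subring_set_zero[OF C] by blast
  next
    fix x y assume "x \<in> {f \<in> poly_carrier S. vanishes_at p f}" "y \<in> {f \<in> poly_carrier S. vanishes_at p f}"
    then show "x + y \<in> {f \<in> poly_carrier S. vanishes_at p f}"
      using vanishes_at_add[OF p] subring_set_add[OF C] by blast
  next
    fix c x assume "c \<in> poly_carrier S" "x \<in> {f \<in> poly_carrier S. vanishes_at p f}"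
    then show "c * x \<in> {f \<in> poly_carrier S. vanishes_at p f}"
      using vanishes_at_mult_iff[OF p] subring_set_mult[OF C] by blast
  qed blast
  then show ?thesis
    unfolding prime_on_def vanishing_ideal_def using one vanishes_at_mult_iff[OF p] by blast
qed

lemma pinv_ideal_subset_vanishing_ideal:
  assumes p: "prime_on UNIV p" shows "pinv_ideal S \<subseteq> vanishing_ideal S p"
proof (rule pinv_ideal_minimal)
  have "ideal_on (poly_carrier S) (vanishing_ideal S p)"
    using prime_on_vanishing_ideal[OF p] by (simp add: prime_on_def)
  then show "ideal (vanishing_ideal S p) (poly_ring_on S)"
    by (simp add: poly_ring_on_eq ideal_set_ring_iff[OF subring_set_poly_carrier])
  show "pinv_generators S \<subseteq> vanishing_ideal S p"
    using vanishes_at_pinv_generators[OF p] pinv_generators_subset[of S]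
    by (auto simp: vanishing_ideal_def pinv_generators_def)
qed

lemma (in ring) quot_image_mem_iff:
  assumes I: "ideal I R" and P: "ideal P R" and "I \<subseteq> P" and a: "a \<in> carrier R"
  shows "I +> a \<in> (+>) I ` P \<longleftrightarrow> a \<in> P"
proof -
  have "(+>) I ` P \<subseteq> carrier (R Quot I)"
    using ideal.Icarr[OF P] by (auto simp: FactRing_def A_RCOSETS_def')
  then have "a \<in> \<Union> ((+>) I ` P) \<longleftrightarrow> I +> a \<in> (+>) I ` P"
    by (rule canonical_proj_vimage_mem_iff[OF I _ a])
  moreover have "\<Union> ((+>) I ` P) = P"
    using ideal_incl_iff[OF I P] \<open>I \<subseteq> P\<close> by simp
  ultimately show ?thesis by simp
qed

lemma (in cring) primeideal_quot_image:
  assumes I: "ideal I R" and P: "primeideal P R" and "I \<subseteq> P"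
  shows "primeideal ((+>) I ` P) (R Quot I)"
proof -
  have P_ideal: "ideal P R" using P by (rule primeideal.axioms(1))
  have mem: "I +> a \<in> (+>) I ` P \<longleftrightarrow> a \<in> P" if "a \<in> carrier R" for a
    by (rule quot_image_mem_iff[OF I P_ideal \<open>I \<subseteq> P\<close> that])
  have carrier: "carrier (R Quot I) = (+>) I ` carrier R"
    by (auto simp: FactRing_def A_RCOSETS_def')
  show ?thesis
  proof (rule primeidealI)
    show "ideal ((+>) I ` P) (R Quot I)" by (rule ring_ideal_imp_quot_ideal[OF I P_ideal])
    show "cring (R Quot I)" by (rule ideal.quotient_is_cring[OF I is_cring])
    have "\<one> \<notin> P"
      using ideal.one_imp_carrier[OF P_ideal] primeideal.I_notcarr[OF P] by metis
    then have "I +> \<one> \<notin> (+>) I ` P" using mem[OF one_closed] by simp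
    moreover have "I +> \<one> \<in> carrier (R Quot I)" using carrier by simp
    ultimately show "carrier (R Quot I) \<noteq> (+>) I ` P" by blast
  next
    fix a b assume "a \<in> carrier (R Quot I)" "b \<in> carrier (R Quot I)"
      and ab: "a \<otimes>\<^bsub>R Quot I\<^esub> b \<in> (+>) I ` P"
    then obtain x y where xy: "x \<in> carrier R" "y \<in> carrier R" "a = I +> x" "b = I +> y"
      unfolding carrier by blast
    then have "a \<otimes>\<^bsub>R Quot I\<^esub> b = I +> (x \<otimes> y)"
      using ring_hom_mult[OF ideal.rcos_ring_hom[OF I], of x y] by simp
    then have "x \<otimes> y \<in> P" using ab mem[OF m_closed[OF xy(1,2)]] by simp
    then have "x \<in> P \<or> y \<in> P" using primeideal.I_prime[OF P] xy(1,2) by blast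
    then show "a \<in> (+>) I ` P \<or> b \<in> (+>) I ` P"
      using mem[OF xy(1)] mem[OF xy(2)] xy(3,4) by blast
  qed
qed

definition quot_map :: "'a::comm_ring_1 set \<Rightarrow> (('a \<Rightarrow>\<^sub>0 nat) \<Rightarrow>\<^sub>0 'a) \<Rightarrow> (('a \<Rightarrow>\<^sub>0 nat) \<Rightarrow>\<^sub>0 'a) set" where
  "quot_map S = (+>\<^bsub>poly_ring_on S\<^esub>) (pinv_ideal S)"

lemma eta_eq_quot_map: "eta S r = quot_map S (pconst r)"
  by (simp add: eta_def quot_map_def)

lemma quot_map_ring_hom_ring: "ring_hom_ring (poly_ring_on S) (pinv_loc S) (quot_map S)"
  unfolding quot_map_def pinv_loc_def by (rule ideal.rcos_ring_hom_ring[OF ideal_pinv_ideal])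

lemma quot_map_ring_hom: "quot_map S \<in> ring_hom (poly_ring_on S) (pinv_loc S)"
  using quot_map_ring_hom_ring by (rule ring_hom_ring.homh)

lemma cring_pinv_loc: "cring (pinv_loc S)"
  unfolding pinv_loc_def by (rule ideal.quotient_is_cring[OF ideal_pinv_ideal cring_poly_ring_on])

lemma carrier_pinv_loc: "carrier (pinv_loc S) = quot_map S ` poly_carrier S"
  by (auto simp: pinv_loc_def FactRing_def A_RCOSETS_def' quot_map_def poly_ring_on_eq)

lemma zero_pinv_loc: "\<zero>\<^bsub>pinv_loc S\<^esub> = pinv_ideal S"
  by (simp add: pinv_loc_def FactRing_def)

lemma one_pinv_loc: "\<one>\<^bsub>pinv_loc S\<^esub> = quot_map S 1"
  by (simp add: pinv_loc_def FactRing_def quot_map_def poly_ring_on_eq)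

lemma quot_map_mult:
  "f \<in> poly_carrier S \<Longrightarrow> g \<in> poly_carrier S \<Longrightarrow>
    quot_map S (f * g) = quot_map S f \<otimes>\<^bsub>pinv_loc S\<^esub> quot_map S g"
  using ring_hom_mult[OF quot_map_ring_hom, of f S g] by (simp add: poly_ring_on_eq)

lemma quot_map_eq_iff:
  assumes "f \<in> poly_carrier S" "g \<in> poly_carrier S"
  shows "quot_map S f = quot_map S g \<longleftrightarrow> f - g \<in> pinv_ideal S"
proof -
  have "a_minus (poly_ring_on S) f g \<in> pinv_ideal S \<longleftrightarrow> quot_map S f = quot_map S g"
    unfolding quot_map_def using assms
    by (intro ring.quotient_eq_iff_same_a_r_cos cring.axioms(1) cring_poly_ring_on ideal_pinv_ideal)
       (auto simp: poly_ring_on_eq)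
  then show ?thesis
    using assms by (simp add: poly_ring_on_eq a_minus_set_ring[OF subring_set_poly_carrier])
qed

lemma quot_map_eq_zero_iff:
  assumes "f \<in> poly_carrier S"
  shows "quot_map S f = \<zero>\<^bsub>pinv_loc S\<^esub> \<longleftrightarrow> f \<in> pinv_ideal S"
proof
  assume "quot_map S f = \<zero>\<^bsub>pinv_loc S\<^esub>"
  then show "f \<in> pinv_ideal S"
    using ideal.rcos_const_imp_mem[OF ideal_pinv_ideal, of f S] assms
    by (simp add: zero_pinv_loc quot_map_def poly_ring_on_eq)
next
  assume "f \<in> pinv_ideal S"
  then show "quot_map S f = \<zero>\<^bsub>pinv_loc S\<^esub>"
    using ring.a_rcos_zero[OF cring.axioms(1)[OF cring_poly_ring_on] ideal_pinv_ideal]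
    by (simp add: zero_pinv_loc quot_map_def)
qed

lemma eta_ring_hom: "eta S \<in> ring_hom tc_ring (pinv_loc S)"
proof -
  have "pconst \<in> ring_hom tc_ring (poly_ring_on S)"
    by (rule ring_hom_memI) (auto simp: tc_ring_eq_set_ring poly_ring_on_eq pconst_mult pconst_add)
  then have "quot_map S \<circ> pconst \<in> ring_hom tc_ring (pinv_loc S)"
    by (rule ring_hom_trans[OF _ quot_map_ring_hom])
  then show ?thesis by (simp add: comp_def eta_eq_quot_map[abs_def])
qed

section \<open>Primes of \<open>R[x\<^sub>s]\<close> containing \<open>I\<close>\<close>

locale prime_over_pinv_ideal =
  fixes S :: "'a::comm_ring_1 set" and Q :: "(('a \<Rightarrow>\<^sub>0 nat) \<Rightarrow>\<^sub>0 'a) set"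
  assumes prime: "prime_on (poly_carrier S) Q"
    and pinv_ideal_subset: "pinv_ideal S \<subseteq> Q"
begin

lemma ideal: "ideal_on (poly_carrier S) Q"
  using prime by (simp add: prime_on_def)

lemmas subring = subring_set_poly_carrier[of S]

lemma contraction_prime: "prime_on UNIV {r. pconst r \<in> Q}"
  using prime ideal_on_zero[OF ideal] ideal_on_add[OF ideal] ideal_on_lmult[OF ideal]
  by (auto simp: prime_on_def ideal_on_def pconst_add pconst_mult)

lemma pconst_mult_pvar_mem_iff:
  assumes "s \<in> S" shows "pconst s * pvar s \<in> Q \<longleftrightarrow> pconst s \<in> Q"
proof
  assume "pconst s * pvar s \<in> Q"
  then have "pconst s * (pconst s * pvar s) \<in> Q" by (simp add: ideal_on_lmult[OF ideal])
  moreover have "pconst s * (pconst s * pvar s) - pconst s \<in> Q"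
    using pinv_generators_mem(2)[OF assms] pinv_ideal_subset
    by (auto simp: pconst_power power2_eq_square pconst_mult mult.assoc)
  ultimately show "pconst s \<in> Q" using ideal_on_diff_iff[OF subring ideal] by blast
qed (use assms pvar_poly_carrier ideal_on_rmult[OF ideal] in blast)

lemma pvar_mem: assumes "s \<in> S" "pconst s \<in> Q" shows "pvar s \<in> Q"
proof -
  have "pconst s * pvar s ^ 2 \<in> Q"
    using assms pvar_poly_carrier by (intro ideal_on_rmult[OF ideal] subring_set_power[OF subring])
  moreover have "pconst s * pvar s ^ 2 - pvar s \<in> Q"
    using pinv_generators_mem(1)[OF assms(1)] pinv_ideal_subset by blast
  ultimately show ?thesis using ideal_on_diff_iff[OF subring ideal] by blast
qed

text \<open>Modulo \<open>Q\<close>, \<open>s x\<^sub>s\<close> is an idempotent, and it is \<open>0\<close> or \<open>1\<close> according as \<open>s \<in> Q\<close> or not.\<close>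

lemma pconst_mem_iff:
  assumes s: "s \<in> S" shows "pconst s \<in> Q \<longleftrightarrow> pconst s * pvar s - 1 \<notin> Q"
proof -
  let ?e = "pconst s * pvar s"
  have e: "?e \<in> poly_carrier S" "?e - 1 \<in> poly_carrier S"
    using s pvar_poly_carrier subring
    by (auto intro!: subring_set_mult subring_set_diff subring_set_one)
  have "pvar s * (pconst (s ^ 2) * pvar s - pconst s) \<in> Q"
    using pinv_generators_mem(2)[OF s] pinv_ideal_subset pvar_poly_carrier[OF s]
    by (auto intro: ideal_on_lmult[OF ideal])
  moreover have "pvar s * (pconst (s ^ 2) * pvar s - pconst s) = ?e * (?e - 1)"
    by (simp add: pconst_power power2_eq_square pconst_mult algebra_simps)
  ultimately have "?e \<in> Q \<or> ?e - 1 \<in> Q"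
    using prime e by (simp add: prime_on_def)
  moreover have "\<not> (?e \<in> Q \<and> ?e - 1 \<in> Q)"
    using ideal_on_diff[OF subring ideal, of ?e "?e - 1"] prime by (auto simp: prime_on_def)
  ultimately show ?thesis using pconst_mult_pvar_mem_iff[OF s] by blast
qed

lemma monomial_mem:
  assumes "Poly_Mapping.keys m \<subseteq> S" "s \<in> Poly_Mapping.keys m" "pconst s \<in> Q"
  shows "Poly_Mapping.single m c \<in> Q"
proof -
  have "pvar s \<in> Q" using assms pvar_mem by blast
  then have "pvar s ^ Poly_Mapping.lookup m s \<in> Q"
    using assms(2) by (intro ideal_on_power[OF subring ideal]) (auto simp: in_keys_iff)
  then have "(\<Prod>s\<in>Poly_Mapping.keys m. pvar s ^ Poly_Mapping.lookup m s) \<in> Q"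
    using assms(1,2) pvar_poly_carrier
    by (intro ideal_on_prod[OF subring ideal, of _ _ s]) (auto intro!: subring_set_power[OF subring])
  then show ?thesis
    unfolding single_eq_pconst_mult_pvars[of m c] using ideal_on_lmult[OF ideal] by simp
qed

lemma pvars_congruence:
  assumes V: "finite V" "V \<subseteq> S" "V \<inter> {r. pconst r \<in> Q} = {}" and k: "\<forall>s\<in>V. k s \<le> N"
  shows "pconst (\<Prod>s\<in>V. s ^ N) * (\<Prod>s\<in>V. pvar s ^ k s) - pconst (\<Prod>s\<in>V. s ^ (N - k s)) \<in> Q"
proof -
  let ?e = "\<lambda>s. pconst s * pvar s"
  have e: "?e s \<in> poly_carrier S" if "s \<in> V" for s
    using that V pvar_poly_carrier[of s S] by (intro subring_set_mult[OF subring]) auto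
  have e_minus_one: "?e s - 1 \<in> Q" if "s \<in> V" for s
    using that V pconst_mem_iff by blast
  \<comment> \<open>\<open>s\<^sup>N x\<^sub>s\<^sup>k = s\<^sup>N\<^sup>-\<^sup>k (s x\<^sub>s)\<^sup>k\<close>, and \<open>s x\<^sub>s \<equiv> 1\<close>.\<close>
  have "pconst (\<Prod>s\<in>V. s ^ N) * (\<Prod>s\<in>V. pvar s ^ k s) = (\<Prod>s\<in>V. pconst (s ^ (N - k s)) * ?e s ^ k s)"
    unfolding pconst_prod prod.distrib[symmetric]
  proof (rule prod.cong[OF refl])
    fix s assume "s \<in> V"
    then have "pconst (s ^ N) = pconst (s ^ (N - k s)) * pconst s ^ k s"
      using k by (simp add: pconst_mult pconst_power power_add[symmetric])
    then show "pconst (s ^ N) * pvar s ^ k s = pconst (s ^ (N - k s)) * ?e s ^ k s"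
      by (simp add: power_mult_distrib mult.assoc)
  qed
  moreover have "(\<Prod>s\<in>V. pconst (s ^ (N - k s)) * ?e s ^ k s) - (\<Prod>s\<in>V. pconst (s ^ (N - k s))) \<in> Q"
  proof (rule ideal_on_prod_diff[OF subring ideal])
    fix s assume s: "s \<in> V"
    show "pconst (s ^ (N - k s)) * ?e s ^ k s \<in> poly_carrier S"
      by (rule subring_set_mult[OF subring pconst_poly_carrier subring_set_power[OF subring e[OF s]]])
    have "pconst (s ^ (N - k s)) * (?e s ^ k s - 1) \<in> Q"
      using ideal_on_power_diff_one[OF subring ideal e[OF s] e_minus_one[OF s]]
      by (intro ideal_on_lmult[OF ideal]) simp_all
    then show "pconst (s ^ (N - k s)) * ?e s ^ k s - pconst (s ^ (N - k s)) \<in> Q"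
      by (simp add: right_diff_distrib)
  qed simp
  ultimately show ?thesis by (simp add: pconst_prod)
qed

lemma monomial_congruence:
  assumes V: "finite V" "V \<subseteq> S" "V \<inter> {r. pconst r \<in> Q} = {}"
    and m: "Poly_Mapping.keys m \<subseteq> S" "Poly_Mapping.keys m - {r. pconst r \<in> Q} \<subseteq> V"
      "\<forall>s\<in>V. Poly_Mapping.lookup m s \<le> N"
  shows "pconst (\<Prod>s\<in>V. s ^ N) * Poly_Mapping.single m c - pconst (c * cleared_monomial V N m) \<in> Q"
proof (cases "Poly_Mapping.keys m \<subseteq> V")
  case True
  let ?k = "Poly_Mapping.lookup m"
  have "(\<Prod>s\<in>Poly_Mapping.keys m. pvar s ^ ?k s) = (\<Prod>s\<in>V. pvar s ^ ?k s)"
    using True V(1) by (intro prod.mono_neutral_left) (auto simp: not_in_keys_iff_lookup_eq_zero)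
  then have "pconst (\<Prod>s\<in>V. s ^ N) * (\<Prod>s\<in>Poly_Mapping.keys m. pvar s ^ ?k s)
      - pconst (cleared_monomial V N m) \<in> Q"
    using pvars_congruence[OF V m(3)] True by (simp add: cleared_monomial_def)
  then have "pconst c * (pconst (\<Prod>s\<in>V. s ^ N) * (\<Prod>s\<in>Poly_Mapping.keys m. pvar s ^ ?k s)
      - pconst (cleared_monomial V N m)) \<in> Q"
    by (rule ideal_on_lmult[OF ideal pconst_poly_carrier])
  then show ?thesis
    by (simp add: single_eq_pconst_mult_pvars[of m c] pconst_mult algebra_simps)
next
  case False
  then obtain s where "s \<in> Poly_Mapping.keys m" "s \<notin> V" by blast
  then have "Poly_Mapping.single m c \<in> Q" using m monomial_mem by blast
  then show ?thesis
    using False ideal_on_lmult[OF ideal] by (simp add: cleared_monomial_def)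
qed

theorem mem_iff_vanishes_at:
  assumes f: "f \<in> poly_carrier S"
  shows "f \<in> Q \<longleftrightarrow> vanishes_at {r. pconst r \<in> Q} f"
proof -
  define V where "V = poly_vars f - {r. pconst r \<in> Q}"
  define N where "N = exponent_sum f"
  have V: "finite V" "V \<subseteq> S" "V \<inter> {r. pconst r \<in> Q} = {}"
    using poly_vars_poly_carrier[OF f] by (auto simp: V_def)
  have "pconst (\<Prod>s\<in>V. s ^ N) * f - pconst (cleared_eval V N f)
      = (\<Sum>m\<in>Poly_Mapping.keys f. pconst (\<Prod>s\<in>V. s ^ N) * Poly_Mapping.single m (Poly_Mapping.lookup f m)
           - pconst (Poly_Mapping.lookup f m * cleared_monomial V N m))"
    by (subst (1) poly_mapping_sum_singles[of f])
       (simp add: cleared_eval_def pconst_sum sum_distrib_left sum_subtractf)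
  also have "\<dots> \<in> Q"
  proof (intro ideal_on_sum[OF ideal] monomial_congruence[OF V])
    fix m assume m: "m \<in> Poly_Mapping.keys f"
    show "Poly_Mapping.keys m \<subseteq> S" using f m by (auto simp: poly_carrier_def)
    show "Poly_Mapping.keys m - {r. pconst r \<in> Q} \<subseteq> V" using m by (auto simp: V_def poly_vars_def)
    show "\<forall>s\<in>V. Poly_Mapping.lookup m s \<le> N" using lookup_le_exponent_sum[OF m] by (simp add: N_def)
  qed
  finally have "pconst (\<Prod>s\<in>V. s ^ N) * f \<in> Q \<longleftrightarrow> pconst (cleared_eval V N f) \<in> Q"
    using ideal_on_diff_iff[OF subring ideal] by blast
  moreover have "(\<Prod>s\<in>V. s ^ N) \<notin> {r. pconst r \<in> Q}"
    using V(3) by (intro prime_on_prod_notin[OF contraction_prime]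
        prime_on_power_notin[OF contraction_prime]) auto
  ultimately have "f \<in> Q \<longleftrightarrow> pconst (cleared_eval V N f) \<in> Q"
    using prime_on_mult_iff[OF prime pconst_poly_carrier f] by simp
  then show ?thesis by (simp add: vanishes_at_def V_def N_def)
qed

end

lemma Spec_subset_carrier: "q \<in> Spec R \<Longrightarrow> q \<subseteq> carrier R"
  unfolding Spec_def using primeideal.axioms(1) ideal.axioms(1) additive_subgroup.a_subset by blast

lemma zero_mem_Spec: "q \<in> Spec R \<Longrightarrow> \<zero>\<^bsub>R\<^esub> \<in> q"
  unfolding Spec_def using primeideal.axioms(1) ideal.axioms(1) additive_subgroup.zero_closed by blast

lemma prime_over_pinv_ideal_vimage:
  assumes q: "q \<in> Spec (pinv_loc S)"
  shows "prime_over_pinv_ideal S {f \<in> poly_carrier S. quot_map S f \<in> q}"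
proof
  have "primeideal {f \<in> carrier (poly_ring_on S). quot_map S f \<in> q} (poly_ring_on S)"
    using q by (intro ring_hom_ring.primeideal_vimage[OF quot_map_ring_hom_ring cring_poly_ring_on])
      (simp add: Spec_def)
  then show "prime_on (poly_carrier S) {f \<in> poly_carrier S. quot_map S f \<in> q}"
    by (simp add: poly_ring_on_eq primeideal_set_ring_iff[OF subring_set_poly_carrier])
  show "pinv_ideal S \<subseteq> {f \<in> poly_carrier S. quot_map S f \<in> q}"
  proof
    fix f assume f: "f \<in> pinv_ideal S"
    then have "f \<in> poly_carrier S" using pinv_ideal_subset_poly_carrier by blast
    then show "f \<in> {f \<in> poly_carrier S. quot_map S f \<in> q}"
      using f quot_map_eq_zero_iff[of f S] zero_mem_Spec[OF q] by simp
  qed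
qed

lemma vimage_eta_eq: "eta S -` q = {r. pconst r \<in> {f \<in> poly_carrier S. quot_map S f \<in> q}}"
  by (auto simp: eta_eq_quot_map)

lemma vimage_eta_Spec:
  "q \<in> Spec (pinv_loc S) \<Longrightarrow> eta S -` q \<in> Spec (tc_ring :: 'a::comm_ring_1 ring)"
  using prime_over_pinv_ideal.contraction_prime[OF prime_over_pinv_ideal_vimage]
  by (simp add: vimage_eta_eq Spec_def tc_ring_eq_set_ring primeideal_set_ring_iff[OF subring_set_UNIV])

lemma quot_map_mem_iff_vanishes_at:
  assumes "q \<in> Spec (pinv_loc S)" "f \<in> poly_carrier S"
  shows "quot_map S f \<in> q \<longleftrightarrow> vanishes_at (eta S -` q) f"
  using prime_over_pinv_ideal.mem_iff_vanishes_at[OF prime_over_pinv_ideal_vimage[OF assms(1)] assms(2)]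
    assms(2) by (simp add: vimage_eta_eq)

lemma inj_on_vimage_eta: "inj_on (\<lambda>q. eta S -` q) (Spec (pinv_loc S))"
proof (rule inj_onI)
  have "q \<subseteq> q'" if "q \<in> Spec (pinv_loc S)" "q' \<in> Spec (pinv_loc S)" "eta S -` q = eta S -` q'"
    for q q'
  proof
    fix x assume "x \<in> q"
    moreover have "q \<subseteq> carrier (pinv_loc S)" using that(1) by (rule Spec_subset_carrier)
    ultimately obtain f where "f \<in> poly_carrier S" "x = quot_map S f"
      by (auto simp: carrier_pinv_loc)
    then show "x \<in> q'" using \<open>x \<in> q\<close> that quot_map_mem_iff_vanishes_at by metis
  qed
  then show "q = q'" if "q \<in> Spec (pinv_loc S)" "q' \<in> Spec (pinv_loc S)" "eta S -` q = eta S -` q'"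
    for q q' using that by blast
qed

lemma vimage_eta_vanishing_ideal:
  assumes p: "p \<in> Spec (tc_ring :: 'a::comm_ring_1 ring)"
  shows "quot_map S ` vanishing_ideal S p \<in> Spec (pinv_loc S)"
    and "eta S -` (quot_map S ` vanishing_ideal S p) = p"
proof -
  have p': "prime_on UNIV p"
    using p by (simp add: Spec_def tc_ring_eq_set_ring primeideal_set_ring_iff[OF subring_set_UNIV])
  have Z: "primeideal (vanishing_ideal S p) (poly_ring_on S)"
    using prime_on_vanishing_ideal[OF p']
    by (simp add: poly_ring_on_eq primeideal_set_ring_iff[OF subring_set_poly_carrier])
  interpret cring "poly_ring_on S" by (rule cring_poly_ring_on)
  show "quot_map S ` vanishing_ideal S p \<in> Spec (pinv_loc S)"
    using primeideal_quot_image[OF ideal_pinv_ideal Z pinv_ideal_subset_vanishing_ideal[OF p']]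
    by (simp add: Spec_def pinv_loc_def quot_map_def)
  have "quot_map S (pconst r) \<in> quot_map S ` vanishing_ideal S p \<longleftrightarrow> r \<in> p" for r
    using quot_image_mem_iff[OF ideal_pinv_ideal primeideal.axioms(1)[OF Z]
        pinv_ideal_subset_vanishing_ideal[OF p'], of "pconst r"]
      vanishes_at_pconst[OF p']
    by (simp add: quot_map_def poly_ring_on_eq vanishing_ideal_def)
  then show "eta S -` (quot_map S ` vanishing_ideal S p) = p"
    by (simp only: set_eq_iff vimage_eq eta_eq_quot_map simp_thms)
qed

lemma bij_betw_vimage_eta:
  "bij_betw (\<lambda>q. eta S -` q) (Spec (pinv_loc S)) (Spec (tc_ring :: 'a::comm_ring_1 ring))"
  unfolding bij_betw_def
  using inj_on_vimage_eta vimage_eta_Spec vimage_eta_vanishing_ideal[of _ S]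
  by (auto simp: image_iff) (metis)

section \<open>Clopen subsets of the spectrum\<close>

lemma topspace_zariski: assumes "cring R" shows "topspace (zariski R) = Spec R"
proof -
  have "ideal (carrier R) R" using assms cring.axioms(1) ring.oneideal by blast
  moreover have "q \<notin> Vset R (carrier R)" if "q \<in> Spec R" for q
  proof
    assume "q \<in> Vset R (carrier R)"
    then have "q = carrier R" using Spec_subset_carrier[OF that] by (auto simp: Vset_def)
    then show False using that primeideal.I_notcarr by (force simp: Spec_def)
  qed
  ultimately have "Spec R \<subseteq> \<Union>{Spec R - Vset R J | J. ideal J R}" by blast
  then show ?thesis unfolding zariski_def topology_generated_by_topspace by blast
qed

lemma Vset_genideal_singleton:
  assumes "ring R" "x \<in> carrier R"
  shows "Vset R (genideal R {x}) = {q \<in> Spec R. x \<in> q}"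
proof -
  have "genideal R {x} \<subseteq> q \<longleftrightarrow> x \<in> q" if q: "q \<in> Spec R" for q
  proof
    assume "genideal R {x} \<subseteq> q"
    then show "x \<in> q" using ring.genideal_self'[OF assms] by blast
  next
    assume "x \<in> q"
    moreover have "ideal q R" using q primeideal.axioms(1) by (force simp: Spec_def)
    ultimately show "genideal R {x} \<subseteq> q" using ring.genideal_minimal[OF assms(1)] by blast
  qed
  then show ?thesis by (auto simp: Vset_def)
qed

lemma topspace_flat_top: assumes "cring R" shows "topspace (flat_top R) = Spec R"
proof -
  have R: "ring R" using assms cring.axioms(1) by blast
  have "fg_ideal R (genideal R {\<zero>\<^bsub>R\<^esub>})"
    unfolding fg_ideal_def using ring.genideal_ideal[OF R] ring.ring_simprules(2)[OF R] by blast
  moreover have "Vset R (genideal R {\<zero>\<^bsub>R\<^esub>}) = Spec R"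
    unfolding Vset_genideal_singleton[OF R ring.ring_simprules(2)[OF R]]
    using zero_mem_Spec by blast
  ultimately have "Spec R \<subseteq> \<Union>{Vset R J | J. fg_ideal R J}" by blast
  moreover have "\<Union>{Vset R J | J. fg_ideal R J} \<subseteq> Spec R" by (auto simp: Vset_def)
  ultimately show ?thesis unfolding flat_top_def topology_generated_by_topspace by blast
qed

lemma clopen_if_complementary:
  assumes R: "cring R" and x: "x \<in> carrier R" and y: "y \<in> carrier R"
    and complementary: "\<And>q. q \<in> Spec R \<Longrightarrow> x \<in> q \<longleftrightarrow> y \<notin> q"
  defines "E \<equiv> {q \<in> Spec R. x \<in> q}"
  shows "closedin (zariski R) E \<and> openin (zariski R) E \<and> closedin (flat_top R) E \<and> openin (flat_top R) E"
proof -
  have rR: "ring R" using R cring.axioms(1) by blast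
  have I: "ideal (genideal R {z}) R" "fg_ideal R (genideal R {z})" if "z \<in> carrier R" for z
    using ring.genideal_ideal[OF rR] that by (auto simp: fg_ideal_def)
  have E: "E = Vset R (genideal R {x})" "Spec R - E = Vset R (genideal R {y})"
    using Vset_genideal_singleton[OF rR x] Vset_genideal_singleton[OF rR y] complementary
    by (auto simp: E_def)
  have "openin (zariski R) (Spec R - Vset R (genideal R {z}))" if "z \<in> carrier R" for z
    unfolding zariski_def by (rule topology_generated_by_Basis) (use I[OF that] in blast)
  moreover have "openin (flat_top R) (Vset R (genideal R {z}))" if "z \<in> carrier R" for z
    unfolding flat_top_def by (rule topology_generated_by_Basis) (use I[OF that] in blast)
  moreover have "E \<subseteq> Spec R" "E = Spec R - Vset R (genideal R {y})" using E by (auto simp: E_def)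
  ultimately show ?thesis
    unfolding closedin_def topspace_zariski[OF R] topspace_flat_top[OF R]
    using x y E by metis
qed

lemma eta_mem_iff:
  assumes "q \<in> Spec (pinv_loc S)" "s \<in> S"
  shows "eta S s \<in> q \<longleftrightarrow> quot_map S (pconst s * pvar s - 1) \<notin> q"
  using prime_over_pinv_ideal.pconst_mem_iff[OF prime_over_pinv_ideal_vimage[OF assms(1)] assms(2)]
    subring_set_poly_carrier[of S] pvar_poly_carrier[OF assms(2)]
  by (simp add: eta_eq_quot_map subring_set_diff subring_set_mult subring_set_one)

lemma clopen_vimage_eta_Vset:
  fixes S :: "'a::comm_ring_1 set"
  assumes s: "s \<in> S"
  defines "E \<equiv> {q \<in> Spec (pinv_loc S). eta S -` q \<in> Vset (tc_ring :: 'a ring) {s}}"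
  shows "closedin (zariski (pinv_loc S)) E \<and> openin (zariski (pinv_loc S)) E
    \<and> closedin (flat_top (pinv_loc S)) E \<and> openin (flat_top (pinv_loc S)) E"
proof -
  have "E = {q \<in> Spec (pinv_loc S). eta S s \<in> q}"
    unfolding E_def using vimage_eta_Spec[of _ S] by (auto simp: Vset_def)
  moreover have "quot_map S (pconst s * pvar s - 1) \<in> carrier (pinv_loc S)"
    using s subring_set_poly_carrier[of S] pvar_poly_carrier[OF s]
    by (auto simp: carrier_pinv_loc intro!: subring_set_diff subring_set_mult subring_set_one)
  moreover have "eta S s \<in> carrier (pinv_loc S)"
    by (simp add: eta_eq_quot_map carrier_pinv_loc)
  ultimately show ?thesis
    using clopen_if_complementary[OF cring_pinv_loc, of "eta S s" S "quot_map S (pconst s * pvar s - 1)"]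
      eta_mem_iff[OF _ s] by simp
qed

section \<open>\<open>\<eta>\<close> is an epimorphism\<close>

lemma (in cring) pointwise_inverse_unique:
  assumes c: "a \<in> carrier R" "b \<in> carrier R" "c \<in> carrier R"
    and h: "a \<otimes> a \<otimes> b = a" "a \<otimes> b \<otimes> b = b" "a \<otimes> a \<otimes> c = a" "a \<otimes> c \<otimes> c = c"
  shows "b = c"
proof -
  have "(a \<otimes> c) \<otimes> (a \<otimes> b) = (a \<otimes> a \<otimes> c) \<otimes> b" using c by (simp add: m_ac)
  then have e1: "(a \<otimes> c) \<otimes> (a \<otimes> b) = a \<otimes> b" using h by simp
  have "(a \<otimes> b) \<otimes> (a \<otimes> c) = (a \<otimes> a \<otimes> b) \<otimes> c" using c by (simp add: m_ac)
  then have e2: "(a \<otimes> b) \<otimes> (a \<otimes> c) = a \<otimes> c" using h by simp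
  have ab_ac: "a \<otimes> b = a \<otimes> c" using e1 e2 c by (metis m_closed m_comm)
  have "b = (a \<otimes> b) \<otimes> b" using h c by (simp add: m_ac)
  also have "\<dots> = (a \<otimes> c) \<otimes> b" using ab_ac by simp
  also have "\<dots> = c \<otimes> (a \<otimes> b)" using c by (simp add: m_ac)
  also have "\<dots> = c \<otimes> (a \<otimes> c)" using ab_ac by simp
  also have "\<dots> = c" using h c by (simp add: m_ac)
  finally show ?thesis .
qed

lemma ring_hom_eq_on_pointwise_inverse:
  assumes "ring A" "cring T" "g \<in> ring_hom A T" "h \<in> ring_hom A T"
    and "a \<in> carrier A" "b \<in> carrier A"
    and "a \<otimes>\<^bsub>A\<^esub> a \<otimes>\<^bsub>A\<^esub> b = a" "a \<otimes>\<^bsub>A\<^esub> b \<otimes>\<^bsub>A\<^esub> b = b" "g a = h a"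
  shows "g b = h b"
proof -
  have "k a \<otimes>\<^bsub>T\<^esub> k a \<otimes>\<^bsub>T\<^esub> k b = k a \<and> k a \<otimes>\<^bsub>T\<^esub> k b \<otimes>\<^bsub>T\<^esub> k b = k b
      \<and> k a \<in> carrier T \<and> k b \<in> carrier T" if "k \<in> ring_hom A T" for k
    using assms ring_hom_mult[OF that] ring_hom_closed[OF that] ring.ring_simprules(5)[OF assms(1)]
    by metis
  then show ?thesis
    using cring.pointwise_inverse_unique[OF assms(2), of "g a" "g b" "h b"] assms by metis
qed

lemma pvar_pointwise_inverse:
  assumes s: "s \<in> S"
  shows "eta S s \<otimes>\<^bsub>pinv_loc S\<^esub> eta S s \<otimes>\<^bsub>pinv_loc S\<^esub> quot_map S (pvar s) = eta S s"
    and "eta S s \<otimes>\<^bsub>pinv_loc S\<^esub> quot_map S (pvar s) \<otimes>\<^bsub>pinv_loc S\<^esub> quot_map S (pvar s)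
      = quot_map S (pvar s)"
proof -
  have x: "pvar s \<in> poly_carrier S" using pvar_poly_carrier[OF s] .
  note mult = subring_set_mult[OF subring_set_poly_carrier]
  have "pconst s * pconst s * pvar s - pconst s \<in> pinv_ideal S"
    using pinv_generators_mem(2)[OF s] by (simp add: pconst_power power2_eq_square pconst_mult)
  moreover have "pconst s * pconst s * pvar s \<in> poly_carrier S" using x by (simp add: mult)
  ultimately have "quot_map S (pconst s * pconst s * pvar s) = quot_map S (pconst s)"
    using quot_map_eq_iff[OF _ pconst_poly_carrier] by blast
  then show "eta S s \<otimes>\<^bsub>pinv_loc S\<^esub> eta S s \<otimes>\<^bsub>pinv_loc S\<^esub> quot_map S (pvar s) = eta S s"
    using x by (simp add: eta_eq_quot_map quot_map_mult mult)
  have "pconst s * pvar s * pvar s - pvar s \<in> pinv_ideal S"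
    using pinv_generators_mem(1)[OF s] by (simp add: power2_eq_square mult.assoc)
  moreover have "pconst s * pvar s * pvar s \<in> poly_carrier S" using x by (simp add: mult)
  ultimately have "quot_map S (pconst s * pvar s * pvar s) = quot_map S (pvar s)"
    using quot_map_eq_iff[OF _ x] by blast
  then show "eta S s \<otimes>\<^bsub>pinv_loc S\<^esub> quot_map S (pvar s) \<otimes>\<^bsub>pinv_loc S\<^esub> quot_map S (pvar s)
      = quot_map S (pvar s)"
    using x by (simp add: eta_eq_quot_map quot_map_mult mult)
qed

lemma eta_epi:
  fixes T :: "'c ring" and S :: "'a::comm_ring_1 set"
  assumes T: "cring T" and g: "g \<in> ring_hom (pinv_loc S) T" and h: "h \<in> ring_hom (pinv_loc S) T"
    and eq: "\<And>r. g (eta S r) = h (eta S r)"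
    and x: "x \<in> carrier (pinv_loc S)"
  shows "g x = h x"
proof -
  have gq: "g \<circ> quot_map S \<in> ring_hom (poly_ring_on S) T" and hq: "h \<circ> quot_map S \<in> ring_hom (poly_ring_on S) T"
    using ring_hom_trans[OF quot_map_ring_hom] g h by blast+
  obtain f where f: "f \<in> poly_carrier S" "x = quot_map S f" using x by (auto simp: carrier_pinv_loc)
  from f(1) have "f \<in> poly_carrier S \<and> g (quot_map S f) = h (quot_map S f)"
  proof (induction rule: poly_carrier_induct)
    case (pconst c)
    then show ?case using eq by (simp add: eta_eq_quot_map)
  next
    case (pvar s)
    then show ?case
      using ring_hom_eq_on_pointwise_inverse[OF cring.axioms(1)[OF cring_pinv_loc] T g h _ _
          pvar_pointwise_inverse[OF pvar]] eq pvar_poly_carrier[OF pvar]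
      by (simp add: eta_eq_quot_map carrier_pinv_loc)
  next
    case (add x y)
    then show ?case
      using ring_hom_add[OF gq, of x y] ring_hom_add[OF hq, of x y] subring_set_poly_carrier[of S]
      by (simp add: poly_ring_on_eq subring_set_add)
  next
    case (mult x y)
    then show ?case
      using ring_hom_mult[OF gq, of x y] ring_hom_mult[OF hq, of x y] subring_set_poly_carrier[of S]
      by (simp add: poly_ring_on_eq subring_set_mult)
  qed
  then show ?thesis using f by simp
qed

section \<open>Nontriviality and the kernel of \<open>\<eta>\<close>\<close>

lemma pconst_mem_pinv_ideal_imp_mem_prime:
  assumes "pconst r \<in> pinv_ideal S" "prime_on UNIV p" shows "r \<in> p"
  using pinv_ideal_subset_vanishing_ideal[OF assms(2)] assms vanishes_at_pconst
  by (auto simp: vanishing_ideal_def)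

lemma eta_eq_zero_imp_nilpotent:
  assumes "eta S r = \<zero>\<^bsub>pinv_loc S\<^esub>" shows "\<exists>n. r ^ n = 0"
proof (rule ccontr)
  assume "\<nexists>n. r ^ n = 0"
  then obtain p where "prime_on UNIV p" "r \<notin> p"
    using exists_prime_on_avoiding_powers by blast
  moreover have "quot_map S (pconst r) = \<zero>\<^bsub>pinv_loc S\<^esub>"
    using assms by (simp add: eta_eq_quot_map)
  then have "pconst r \<in> pinv_ideal S"
    using quot_map_eq_zero_iff[OF pconst_poly_carrier] by blast
  ultimately show False using pconst_mem_pinv_ideal_imp_mem_prime by blast
qed

lemma pinv_loc_nontrivial_iff:
  fixes S :: "'a::comm_ring_1 set"
  shows "\<zero>\<^bsub>pinv_loc S\<^esub> \<noteq> \<one>\<^bsub>pinv_loc S\<^esub> \<longleftrightarrow> (0 :: 'a) \<noteq> 1"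
proof -
  have "\<one>\<^bsub>pinv_loc S\<^esub> = \<zero>\<^bsub>pinv_loc S\<^esub> \<longleftrightarrow> 1 \<in> pinv_ideal S"
    unfolding one_pinv_loc
    by (rule quot_map_eq_zero_iff[OF subring_set_one[OF subring_set_poly_carrier]])
  also have "\<dots> \<longleftrightarrow> (0 :: 'a) = 1"
  proof
    assume "1 \<in> pinv_ideal S"
    then have "(1 :: 'a) \<in> p" if "prime_on UNIV p" for p
      using pconst_mem_pinv_ideal_imp_mem_prime[of 1 S p] that by simp
    then show "(0 :: 'a) = 1"
      using exists_prime_on_avoiding_powers[of "1 :: 'a"] by force
  next
    assume "(0 :: 'a) = 1"
    then have "(1 :: ('a \<Rightarrow>\<^sub>0 nat) \<Rightarrow>\<^sub>0 'a) = 0" by (metis pconst_0 pconst_1)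
    then show "1 \<in> pinv_ideal S"
      using zero_mem_pinv_ideal by simp
  qed
  finally show ?thesis by metis
qed

theorem proposition3p5:
  fixes S :: "'a::comm_ring_1 set"
  shows
    "eta S \<in> ring_hom tc_ring (pinv_loc S)
     \<and> (\<forall>(T :: 'c ring) g h. cring T \<and> g \<in> ring_hom (pinv_loc S) T \<and> h \<in> ring_hom (pinv_loc S) T
            \<and> (\<forall>r. g (eta S r) = h (eta S r))
          \<longrightarrow> (\<forall>x\<in>carrier (pinv_loc S). g x = h x))
     \<and> bij_betw (\<lambda>q. eta S -` q) (Spec (pinv_loc S)) (Spec (tc_ring :: 'a ring))
     \<and> (\<forall>s\<in>S. closedin (zariski (pinv_loc S))
                 {q \<in> Spec (pinv_loc S). eta S -` q \<in> Vset (tc_ring :: 'a ring) {s}}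
             \<and> openin (zariski (pinv_loc S))
                 {q \<in> Spec (pinv_loc S). eta S -` q \<in> Vset (tc_ring :: 'a ring) {s}}
             \<and> closedin (flat_top (pinv_loc S))
                 {q \<in> Spec (pinv_loc S). eta S -` q \<in> Vset (tc_ring :: 'a ring) {s}}
             \<and> openin (flat_top (pinv_loc S))
                 {q \<in> Spec (pinv_loc S). eta S -` q \<in> Vset (tc_ring :: 'a ring) {s}})
     \<and> (\<zero>\<^bsub>pinv_loc S\<^esub> \<noteq> \<one>\<^bsub>pinv_loc S\<^esub> \<longleftrightarrow> (0::'a) \<noteq> 1)
     \<and> {r. eta S r = \<zero>\<^bsub>pinv_loc S\<^esub>} \<subseteq> {r::'a. \<exists>n. r ^ n = 0}"
  apply (intro conjI)
  subgoal by (rule eta_ring_hom)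
  subgoal by (blast intro: eta_epi)
  subgoal by (rule bij_betw_vimage_eta)
  subgoal using clopen_vimage_eta_Vset by blast
  subgoal by (rule pinv_loc_nontrivial_iff)
  subgoal using eta_eq_zero_imp_nilpotent by blast
  done

end
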